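(* Let $(R,\mathfrak m)$ be a noetherian local ring and $M$ an $R$-module. If $M$ admits a primary decomposition, then $\operatorname{Ass}_R(M)=\operatorname{Att}_R(D(M))$. If $M$ admits a secondary decomposition, then $\operatorname{Att}_R(M)=\operatorname{Ass}_R(D(M))$.
   Context: $E=E_R(R/\mathfrak m)$ denotes a fixed injective hull of $R/\mathfrak m$, and $D(\cdot)=\operatorname{Hom}_R(\cdot,E)$. A nonzero module $N$ is coprimary if for every $x\in R$ multiplication by $x$ on $N$ is injective or nilpotent; a submodule $U\subseteq M$ is primary if $M/U$ is coprimary; a primary decomposition of $M$ is a tuple $(U_1,\dots,U_s)$ of primary submodules with $U_1\cap\dots\cap U_s=0$. A nonzero module $N$ is secondary if for every $x\in R$ multiplication by $x$ on $N$ is surjective or nilpotent; a secondary decomposition of $M$ is a tuple $(U_1,\dots,U_s)$ of secondary submodules with $U_1+\dots+U_s=M$. For an arbitrary $R$-module $N$: $\operatorname{Ass}_R(N)$ is the set of primes $\mathfrak p$ with $\mathfrak p=\operatorname{Ann}_R(n)$ for some $n\in N$; $\operatorname{Att}_R(N)$ is the set of primes $\mathfrak p$ with $\mathfrak p=\operatorname{Ann}_R(N/U)$ for some submodule $U\subseteq N$. *)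

theory Defs
  imports "HOL-Algebra.Algebra"
begin

definition local_ring_with :: "('a, 'c) ring_scheme \<Rightarrow> 'a set \<Rightarrow> bool" where
  "local_ring_with R m \<longleftrightarrow> cring R \<and> maximalideal m R \<and>
     (\<forall>I. maximalideal I R \<longrightarrow> I = m)"

definition lin_maps :: "('a, 'c) ring_scheme \<Rightarrow> ('a, 'b) module \<Rightarrow> ('a, 'e) module \<Rightarrow> ('b \<Rightarrow> 'e) set" where
  "lin_maps R M E = {f. f \<in> carrier M \<rightarrow>\<^sub>E carrier E \<and>
     (\<forall>x\<in>carrier M. \<forall>y\<in>carrier M. f (x \<oplus>\<^bsub>M\<^esub> y) = f x \<oplus>\<^bsub>E\<^esub> f y) \<and>
     (\<forall>r\<in>carrier R. \<forall>x\<in>carrier M. f (r \<odot>\<^bsub>M\<^esub> x) = r \<odot>\<^bsub>E\<^esub> f x)}"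

text \<open>The R-module Hom_R(M,E) (the multiplicative fields are irrelevant for a module).\<close>
definition Hom_mod :: "('a, 'c) ring_scheme \<Rightarrow> ('a, 'b) module \<Rightarrow> ('a, 'e) module \<Rightarrow> ('a, 'b \<Rightarrow> 'e) module" where
  "Hom_mod R M E = \<lparr> partial_object.carrier = lin_maps R M E,
     monoid.mult = (\<lambda>f g. undefined), monoid.one = undefined,
     ring.zero = (\<lambda>x\<in>carrier M. \<zero>\<^bsub>E\<^esub>),
     ring.add = (\<lambda>f g. \<lambda>x\<in>carrier M. f x \<oplus>\<^bsub>E\<^esub> g x),
     module.smult = (\<lambda>r f. \<lambda>x\<in>carrier M. r \<odot>\<^bsub>E\<^esub> f x) \<rparr>"

text \<open>Injectivity, stated via Baer's criterion: every R-linear map from an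
  ideal I of R into E extends to R, i.e. is multiplication by an element of E.\<close>
definition injective_module :: "('a, 'c) ring_scheme \<Rightarrow> ('a, 'e) module \<Rightarrow> bool" where
  "injective_module R E \<longleftrightarrow> module R E \<and>
     (\<forall>I \<phi>. ideal I R \<longrightarrow> \<phi> \<in> I \<rightarrow> carrier E \<longrightarrow>
        (\<forall>a\<in>I. \<forall>b\<in>I. \<phi> (a \<oplus>\<^bsub>R\<^esub> b) = \<phi> a \<oplus>\<^bsub>E\<^esub> \<phi> b) \<longrightarrow>
        (\<forall>r\<in>carrier R. \<forall>a\<in>I. \<phi> (r \<otimes>\<^bsub>R\<^esub> a) = r \<odot>\<^bsub>E\<^esub> \<phi> a) \<longrightarrow>
        (\<exists>e\<in>carrier E. \<forall>a\<in>I. \<phi> a = a \<odot>\<^bsub>E\<^esub> e))"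

text \<open>E is an injective hull of R/m: E is injective and contains an element e0 with
  annihilator m (so R e0 is a copy of R/m), such that R e0 is essential in E, i.e. every
  nonzero submodule of E meets R e0 nontrivially.\<close>
definition injective_hull_residue :: "('a, 'c) ring_scheme \<Rightarrow> 'a set \<Rightarrow> ('a, 'e) module \<Rightarrow> bool" where
  "injective_hull_residue R m E \<longleftrightarrow> injective_module R E \<and>
     (\<exists>e0\<in>carrier E. {r \<in> carrier R. r \<odot>\<^bsub>E\<^esub> e0 = \<zero>\<^bsub>E\<^esub>} = m \<and>
        (\<forall>N. submodule N R E \<longrightarrow> N \<noteq> {\<zero>\<^bsub>E\<^esub>} \<longrightarrow>
           (\<exists>r\<in>carrier R. r \<odot>\<^bsub>E\<^esub> e0 \<in> N \<and> r \<odot>\<^bsub>E\<^esub> e0 \<noteq> \<zero>\<^bsub>E\<^esub>)))"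

definition Ass :: "('a, 'c) ring_scheme \<Rightarrow> ('a, 'b) module \<Rightarrow> 'a set set" where
  "Ass R M = {p. primeideal p R \<and>
     (\<exists>n\<in>carrier M. p = {r \<in> carrier R. r \<odot>\<^bsub>M\<^esub> n = \<zero>\<^bsub>M\<^esub>})}"

text \<open>Ann_R(M/U) = {r. r M \<subseteq> U}.\<close>
definition Att :: "('a, 'c) ring_scheme \<Rightarrow> ('a, 'b) module \<Rightarrow> 'a set set" where
  "Att R M = {p. primeideal p R \<and>
     (\<exists>U. submodule U R M \<and> p = {r \<in> carrier R. \<forall>n\<in>carrier M. r \<odot>\<^bsub>M\<^esub> n \<in> U})}"

definition primary_submodule :: "('a, 'c) ring_scheme \<Rightarrow> ('a, 'b) module \<Rightarrow> 'b set \<Rightarrow> bool" where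
  "primary_submodule R M U \<longleftrightarrow> submodule U R M \<and> U \<noteq> carrier M \<and>
     (\<forall>x\<in>carrier R.
        (\<forall>n\<in>carrier M. x \<odot>\<^bsub>M\<^esub> n \<in> U \<longrightarrow> n \<in> U) \<or>
        (\<exists>k::nat. \<forall>n\<in>carrier M. (x [^]\<^bsub>R\<^esub> k) \<odot>\<^bsub>M\<^esub> n \<in> U))"

definition has_primary_decomposition :: "('a, 'c) ring_scheme \<Rightarrow> ('a, 'b) module \<Rightarrow> bool" where
  "has_primary_decomposition R M \<longleftrightarrow>
     (\<exists>Us. (\<forall>U\<in>set Us. primary_submodule R M U) \<and>
           carrier M \<inter> \<Inter>(set Us) = {\<zero>\<^bsub>M\<^esub>})"

definition secondary_submodule :: "('a, 'c) ring_scheme \<Rightarrow> ('a, 'b) module \<Rightarrow> 'b set \<Rightarrow> bool" where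
  "secondary_submodule R M U \<longleftrightarrow> submodule U R M \<and> U \<noteq> {\<zero>\<^bsub>M\<^esub>} \<and>
     (\<forall>x\<in>carrier R.
        (\<forall>u\<in>U. \<exists>v\<in>U. x \<odot>\<^bsub>M\<^esub> v = u) \<or>
        (\<exists>k::nat. \<forall>u\<in>U. (x [^]\<^bsub>R\<^esub> k) \<odot>\<^bsub>M\<^esub> u = \<zero>\<^bsub>M\<^esub>))"

fun submodule_sum :: "('a, 'b) module \<Rightarrow> 'b set list \<Rightarrow> 'b set" where
  "submodule_sum M [] = {\<zero>\<^bsub>M\<^esub>}"
| "submodule_sum M (U # Us) = {a \<oplus>\<^bsub>M\<^esub> b | a b. a \<in> U \<and> b \<in> submodule_sum M Us}"

definition has_secondary_decomposition :: "('a, 'c) ring_scheme \<Rightarrow> ('a, 'b) module \<Rightarrow> bool" where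
  "has_secondary_decomposition R M \<longleftrightarrow>
     (\<exists>Us. (\<forall>U\<in>set Us. secondary_submodule R M U) \<and> submodule_sum M Us = carrier M)"

end

theory Submission
  imports Defs
begin

(* The functor D = Hom(-, E) into the injective hull of the residue field exchanges the
   two kinds of components: multiplication by x is injective on M/U iff it is surjective on
   D(M/U), the maps vanishing on U, and it is nilpotent on M/U iff it is nilpotent on
   D(M/U).  Given a prime p = Ann(D/V) (resp. p = Ann(M/U)), the components whose radical
   differs from p are killed, modulo V (resp. U), by a single element outside p; what
   remains, the intersection (resp. the dual of the quotient by the sum) of the other
   components, is nonzero, every x in p acts nilpotently on it, and every annihilator of a
   nonzero element lies in p.  A maximal such annihilator, which exists because R is
   noetherian, is then exactly p. *)

section \<open>Submodules, annihilators and primes\<close>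

lemma (in module) submoduleI':
  assumes "N \<subseteq> carrier M" "\<zero>\<^bsub>M\<^esub> \<in> N"
    and "\<And>a b. a \<in> N \<Longrightarrow> b \<in> N \<Longrightarrow> a \<oplus>\<^bsub>M\<^esub> b \<in> N"
    and "\<And>r a. r \<in> carrier R \<Longrightarrow> a \<in> N \<Longrightarrow> r \<odot>\<^bsub>M\<^esub> a \<in> N"
  shows "submodule N R M"
proof (rule submoduleI)
  fix a assume a: "a \<in> N"
  hence "(\<ominus>\<^bsub>R\<^esub> \<one>\<^bsub>R\<^esub>) \<odot>\<^bsub>M\<^esub> a = \<ominus>\<^bsub>M\<^esub> a"
    using smult_l_minus[of "\<one>\<^bsub>R\<^esub>" a] assms(1) by auto
  thus "\<ominus>\<^bsub>M\<^esub> a \<in> N" using assms(4)[OF _ a] by (metis R.add.inv_closed R.one_closed)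
qed (use assms in auto)

lemma (in module) submoduleD:
  assumes "submodule N R M"
  shows "N \<subseteq> carrier M" "\<zero>\<^bsub>M\<^esub> \<in> N"
    and "\<And>a b. a \<in> N \<Longrightarrow> b \<in> N \<Longrightarrow> a \<oplus>\<^bsub>M\<^esub> b \<in> N"
    and "\<And>a. a \<in> N \<Longrightarrow> \<ominus>\<^bsub>M\<^esub> a \<in> N"
    and "\<And>r a. r \<in> carrier R \<Longrightarrow> a \<in> N \<Longrightarrow> r \<odot>\<^bsub>M\<^esub> a \<in> N"
  using submoduleE[OF assms] subgroup.one_closed[OF submodule.axioms(1)[OF assms]] by auto

lemma (in module) zero_submodule: "submodule {\<zero>\<^bsub>M\<^esub>} R M"
  by (rule submoduleI') auto

lemma (in module) Inter_submodule:
  assumes "\<forall>U\<in>\<U>. submodule U R M"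
  shows "submodule (carrier M \<inter> \<Inter>\<U>) R M"
proof (rule submoduleI')
  show "\<zero>\<^bsub>M\<^esub> \<in> carrier M \<inter> \<Inter>\<U>" using assms submoduleD(2) by blast
  show "a \<oplus>\<^bsub>M\<^esub> b \<in> carrier M \<inter> \<Inter>\<U>" if "a \<in> carrier M \<inter> \<Inter>\<U>" "b \<in> carrier M \<inter> \<Inter>\<U>" for a b
    using that assms submoduleD(3) by blast
  show "r \<odot>\<^bsub>M\<^esub> a \<in> carrier M \<inter> \<Inter>\<U>" if "r \<in> carrier R" "a \<in> carrier M \<inter> \<Inter>\<U>" for r a
    using that assms submoduleD(5) by blast
qed blast

lemma (in module) smult_preimage_submodule:
  assumes "a \<in> carrier R" "submodule U R M"
  shows "submodule {m \<in> carrier M. a \<odot>\<^bsub>M\<^esub> m \<in> U} R M"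
proof (rule submoduleI')
  show "r \<odot>\<^bsub>M\<^esub> m \<in> {m \<in> carrier M. a \<odot>\<^bsub>M\<^esub> m \<in> U}"
    if "r \<in> carrier R" "m \<in> {m \<in> carrier M. a \<odot>\<^bsub>M\<^esub> m \<in> U}" for r m
  proof -
    have "a \<odot>\<^bsub>M\<^esub> (r \<odot>\<^bsub>M\<^esub> m) = r \<odot>\<^bsub>M\<^esub> (a \<odot>\<^bsub>M\<^esub> m)"
      using that assms(1) by (simp add: smult_assoc1[symmetric] m_comm)
    thus ?thesis using that submoduleD(5)[OF assms(2)] by simp
  qed
next
  show "a' \<oplus>\<^bsub>M\<^esub> b \<in> {m \<in> carrier M. a \<odot>\<^bsub>M\<^esub> m \<in> U}"
    if "a' \<in> {m \<in> carrier M. a \<odot>\<^bsub>M\<^esub> m \<in> U}" "b \<in> {m \<in> carrier M. a \<odot>\<^bsub>M\<^esub> m \<in> U}" for a' b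
    using that assms submoduleD(3)[OF assms(2)] by (simp add: smult_r_distr)
qed (use assms submoduleD(2)[OF assms(2)] in auto)

lemma (in module) colon_ideal:
  assumes "submodule P R M" "m \<in> carrier M"
  shows "ideal {r \<in> carrier R. r \<odot>\<^bsub>M\<^esub> m \<in> P} R"
proof (rule idealI[OF R.ring_axioms])
  show "subgroup {r \<in> carrier R. r \<odot>\<^bsub>M\<^esub> m \<in> P} (add_monoid R)"
  proof (rule R.add.subgroupI)
    fix a assume "a \<in> {r \<in> carrier R. r \<odot>\<^bsub>M\<^esub> m \<in> P}"
    thus "\<ominus>\<^bsub>R\<^esub> a \<in> {r \<in> carrier R. r \<odot>\<^bsub>M\<^esub> m \<in> P}"
      using assms submoduleD(4)[OF assms(1)] by (simp add: smult_l_minus)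
  qed (use assms submoduleD[OF assms(1)] in \<open>auto simp: smult_l_distr\<close>)
next
  fix a x assume "a \<in> {r \<in> carrier R. r \<odot>\<^bsub>M\<^esub> m \<in> P}" "x \<in> carrier R"
  moreover have "(x \<otimes>\<^bsub>R\<^esub> a) \<odot>\<^bsub>M\<^esub> m = x \<odot>\<^bsub>M\<^esub> (a \<odot>\<^bsub>M\<^esub> m)" "a \<otimes>\<^bsub>R\<^esub> x = x \<otimes>\<^bsub>R\<^esub> a"
    using calculation assms(2) by (auto simp: smult_assoc1[symmetric] m_comm)
  ultimately show "x \<otimes>\<^bsub>R\<^esub> a \<in> {r \<in> carrier R. r \<odot>\<^bsub>M\<^esub> m \<in> P}"
    and "a \<otimes>\<^bsub>R\<^esub> x \<in> {r \<in> carrier R. r \<odot>\<^bsub>M\<^esub> m \<in> P}"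
    using submoduleD(5)[OF assms(1)] by auto
qed

lemma (in module) annihilator_ideal:
  assumes "m \<in> carrier M"
  shows "ideal {r \<in> carrier R. r \<odot>\<^bsub>M\<^esub> m = \<zero>\<^bsub>M\<^esub>} R"
  using colon_ideal[OF zero_submodule assms] by simp

lemma (in module) smult_nat_pow_split:
  assumes "x \<in> carrier R" "n \<in> carrier M" "k0 \<le> (k::nat)"
  shows "(x [^]\<^bsub>R\<^esub> k) \<odot>\<^bsub>M\<^esub> n = (x [^]\<^bsub>R\<^esub> k0) \<odot>\<^bsub>M\<^esub> ((x [^]\<^bsub>R\<^esub> (k - k0)) \<odot>\<^bsub>M\<^esub> n)"
proof -
  have "x [^]\<^bsub>R\<^esub> k = x [^]\<^bsub>R\<^esub> k0 \<otimes>\<^bsub>R\<^esub> x [^]\<^bsub>R\<^esub> (k - k0)"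
    using assms by (simp add: nat_pow_mult)
  thus ?thesis using assms by (simp add: smult_assoc1)
qed

lemma (in primeideal) one_notin: "\<one> \<notin> I"
  using I_notcarr one_imp_carrier by blast

lemma (in primeideal) nat_pow_notin:
  assumes "x \<in> carrier R" "x \<notin> I"
  shows "x [^] (k::nat) \<notin> I"
proof (induction k)
  case 0
  show ?case using one_notin by simp
next
  case (Suc k)
  thus ?case using I_prime[of "x [^] k" x] assms by auto
qed

lemma (in primeideal) common_witness_outside:
  assumes "finite A" "\<forall>x\<in>A. \<exists>a\<in>carrier R - I. P a x"
    and "\<forall>x\<in>A. \<forall>a\<in>carrier R. \<forall>b\<in>carrier R. P a x \<longrightarrow> P (b \<otimes> a) x"
  shows "\<exists>a\<in>carrier R - I. \<forall>x\<in>A. P a x"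
  using assms
proof (induction A rule: finite_induct)
  case empty
  show ?case using one_notin by blast
next
  case (insert x A)
  then obtain a b where ab: "a \<in> carrier R - I" "\<forall>y\<in>A. P a y" "b \<in> carrier R - I" "P b x"
    by auto
  have "P (a \<otimes> b) x" using insert.prems(2) ab by auto
  hence "P (b \<otimes> a) x" using ab m_comm[of a b] by simp
  moreover have "\<forall>y\<in>A. P (b \<otimes> a) y" using insert.prems(2) ab by auto
  moreover have "b \<otimes> a \<notin> I" using I_prime ab by blast
  ultimately show ?case using ab by (intro bexI[of _ "b \<otimes> a"]) auto
qed

lemma (in ring) ideal_subset_maximalideal:
  assumes "ideal I R" "I \<noteq> carrier R"
  shows "\<exists>J. maximalideal J R \<and> I \<subseteq> J"
proof -
  define \<A> where "\<A> = {J. ideal J R \<and> I \<subseteq> J \<and> \<one> \<notin> J}"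
  have proper: "\<one> \<notin> J \<longleftrightarrow> J \<noteq> carrier R" if "ideal J R" for J
    using ideal.one_imp_carrier[OF that] ideal.Icarr[OF that] by auto
  have "\<exists>K\<in>\<A>. \<forall>J\<in>\<A>. K \<subseteq> J \<longrightarrow> J = K"
  proof (rule subset_Zorn_nonempty)
    show "\<A> \<noteq> {}" using assms proper unfolding \<A>_def by blast
    fix \<C> assume \<C>: "\<C> \<noteq> {}" "subset.chain \<A> \<C>"
    hence "\<C> \<subseteq> \<A>" unfolding subset_chain_def by simp
    hence "subset.chain {J. ideal J R} \<C>"
      using \<C>(2) unfolding subset_chain_def \<A>_def by auto
    hence "ideal (\<Union>\<C>) R" using chain_Union_is_ideal[of \<C>] \<C>(1) by simp
    thus "\<Union>\<C> \<in> \<A>" using \<C>(1) \<open>\<C> \<subseteq> \<A>\<close> unfolding \<A>_def by auto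
  qed
  then obtain K where K: "K \<in> \<A>" "\<forall>J\<in>\<A>. K \<subseteq> J \<longrightarrow> J = K" by blast
  have "maximalideal K R"
  proof (rule maximalidealI)
    show "ideal K R" "carrier R \<noteq> K" using K proper unfolding \<A>_def by auto
    show "J = K \<or> J = carrier R" if "ideal J R" "K \<subseteq> J" "J \<subseteq> carrier R" for J
    proof (cases "\<one> \<in> J")
      case False
      thus ?thesis using K that unfolding \<A>_def by blast
    qed (use that proper in blast)
  qed
  thus ?thesis using K unfolding \<A>_def by blast
qed

lemma (in noetherian_ring) ideal_set_has_maximal:
  assumes "S \<noteq> {}" "S \<subseteq> {I. ideal I R}"
  shows "\<exists>K\<in>S. \<forall>J\<in>S. K \<subseteq> J \<longrightarrow> J = K"
proof (rule subset_Zorn_nonempty[OF assms(1)])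
  fix \<C> assume \<C>: "\<C> \<noteq> {}" "subset.chain S \<C>"
  hence "subset.chain {I. ideal I R} \<C>"
    using assms(2) unfolding subset_chain_def by auto
  hence "\<Union>\<C> \<in> \<C>" using ideal_chain_is_trivial \<C>(1) by blast
  thus "\<Union>\<C> \<in> S" using \<C>(2) unfolding subset_chain_def by auto
qed

lemma (in module) nilpotent_in_maximal_annihilator:
  assumes Z: "\<And>r z. r \<in> carrier R \<Longrightarrow> z \<in> Z \<Longrightarrow> r \<odot>\<^bsub>M\<^esub> z \<in> Z" and n: "n \<in> Z" "n \<in> carrier M"
    and maximal: "\<And>z. z \<in> Z - {\<zero>\<^bsub>M\<^esub>} \<Longrightarrow>
      {r \<in> carrier R. r \<odot>\<^bsub>M\<^esub> n = \<zero>\<^bsub>M\<^esub>} \<subseteq> {r \<in> carrier R. r \<odot>\<^bsub>M\<^esub> z = \<zero>\<^bsub>M\<^esub>} \<Longrightarrow>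
      {r \<in> carrier R. r \<odot>\<^bsub>M\<^esub> z = \<zero>\<^bsub>M\<^esub>} = {r \<in> carrier R. r \<odot>\<^bsub>M\<^esub> n = \<zero>\<^bsub>M\<^esub>}"
    and x: "x \<in> carrier R" and nilpotent: "(x [^]\<^bsub>R\<^esub> (k::nat)) \<odot>\<^bsub>M\<^esub> n = \<zero>\<^bsub>M\<^esub>"
  shows "x \<odot>\<^bsub>M\<^esub> n = \<zero>\<^bsub>M\<^esub>"
proof (cases "n = \<zero>\<^bsub>M\<^esub>")
  case True
  thus ?thesis using x by simp
next
  case False
  have "\<exists>j::nat. (x [^]\<^bsub>R\<^esub> j) \<odot>\<^bsub>M\<^esub> n \<noteq> \<zero>\<^bsub>M\<^esub> \<and> (x [^]\<^bsub>R\<^esub> Suc j) \<odot>\<^bsub>M\<^esub> n = \<zero>\<^bsub>M\<^esub>"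
    by (rule exists_least_lemma) (use False n nilpotent in auto)
  then obtain j :: nat where j: "(x [^]\<^bsub>R\<^esub> j) \<odot>\<^bsub>M\<^esub> n \<noteq> \<zero>\<^bsub>M\<^esub>" "(x [^]\<^bsub>R\<^esub> Suc j) \<odot>\<^bsub>M\<^esub> n = \<zero>\<^bsub>M\<^esub>"
    by blast
  define z where "z = (x [^]\<^bsub>R\<^esub> j) \<odot>\<^bsub>M\<^esub> n"
  have "{r \<in> carrier R. r \<odot>\<^bsub>M\<^esub> n = \<zero>\<^bsub>M\<^esub>} \<subseteq> {r \<in> carrier R. r \<odot>\<^bsub>M\<^esub> z = \<zero>\<^bsub>M\<^esub>}"
  proof
    fix r assume "r \<in> {r \<in> carrier R. r \<odot>\<^bsub>M\<^esub> n = \<zero>\<^bsub>M\<^esub>}"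
    hence r: "r \<in> carrier R" "r \<odot>\<^bsub>M\<^esub> n = \<zero>\<^bsub>M\<^esub>" by auto
    moreover have "r \<odot>\<^bsub>M\<^esub> z = (x [^]\<^bsub>R\<^esub> j) \<odot>\<^bsub>M\<^esub> (r \<odot>\<^bsub>M\<^esub> n)"
      unfolding z_def using x n(2) r(1) by (simp add: smult_assoc1[symmetric] m_comm)
    ultimately show "r \<in> {r \<in> carrier R. r \<odot>\<^bsub>M\<^esub> z = \<zero>\<^bsub>M\<^esub>}" using x by simp
  qed
  moreover have "z \<in> Z - {\<zero>\<^bsub>M\<^esub>}" using j n Z x unfolding z_def by auto
  ultimately have "{r \<in> carrier R. r \<odot>\<^bsub>M\<^esub> z = \<zero>\<^bsub>M\<^esub>} = {r \<in> carrier R. r \<odot>\<^bsub>M\<^esub> n = \<zero>\<^bsub>M\<^esub>}"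
    using maximal by blast
  moreover have "x \<odot>\<^bsub>M\<^esub> z = (x [^]\<^bsub>R\<^esub> Suc j) \<odot>\<^bsub>M\<^esub> n"
    unfolding z_def using x n(2) by (simp add: smult_assoc1[symmetric] m_comm)
  ultimately show ?thesis using j(2) x by auto
qed

lemma (in module) exists_annihilator_eq:
  assumes "noetherian_ring R" "p \<subseteq> carrier R"
    and Z: "Z \<subseteq> carrier M" "\<And>r z. r \<in> carrier R \<Longrightarrow> z \<in> Z \<Longrightarrow> r \<odot>\<^bsub>M\<^esub> z \<in> Z"
    and "z1 \<in> Z" "z1 \<noteq> \<zero>\<^bsub>M\<^esub>"
    and ann_subset: "\<And>z. z \<in> Z \<Longrightarrow> z \<noteq> \<zero>\<^bsub>M\<^esub> \<Longrightarrow> {r \<in> carrier R. r \<odot>\<^bsub>M\<^esub> z = \<zero>\<^bsub>M\<^esub>} \<subseteq> p"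
    and nilpotent: "\<And>x z. x \<in> p \<Longrightarrow> z \<in> Z \<Longrightarrow> \<exists>k::nat. (x [^]\<^bsub>R\<^esub> k) \<odot>\<^bsub>M\<^esub> z = \<zero>\<^bsub>M\<^esub>"
  shows "\<exists>z\<in>Z. {r \<in> carrier R. r \<odot>\<^bsub>M\<^esub> z = \<zero>\<^bsub>M\<^esub>} = p"
proof -
  define ann where "ann z = {r \<in> carrier R. r \<odot>\<^bsub>M\<^esub> z = \<zero>\<^bsub>M\<^esub>}" for z
  have ideals: "ann ` (Z - {\<zero>\<^bsub>M\<^esub>}) \<subseteq> {I. ideal I R}"
    using annihilator_ideal Z(1) unfolding ann_def by auto
  have nonempty: "ann ` (Z - {\<zero>\<^bsub>M\<^esub>}) \<noteq> {}" using \<open>z1 \<in> Z\<close> \<open>z1 \<noteq> \<zero>\<^bsub>M\<^esub>\<close> by blast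
  obtain K where K: "K \<in> ann ` (Z - {\<zero>\<^bsub>M\<^esub>})"
    and K_max: "\<forall>J\<in>ann ` (Z - {\<zero>\<^bsub>M\<^esub>}). K \<subseteq> J \<longrightarrow> J = K"
    using noetherian_ring.ideal_set_has_maximal[OF assms(1) nonempty ideals] by (elim bexE)
  then obtain n where n: "n \<in> Z - {\<zero>\<^bsub>M\<^esub>}" and "K = ann n" by blast
  hence maximal: "\<And>z. z \<in> Z - {\<zero>\<^bsub>M\<^esub>} \<Longrightarrow> ann n \<subseteq> ann z \<Longrightarrow> ann z = ann n"
    using K_max by blast
  have "p \<subseteq> ann n"
  proof
    fix x assume "x \<in> p"
    then obtain k :: nat where "(x [^]\<^bsub>R\<^esub> k) \<odot>\<^bsub>M\<^esub> n = \<zero>\<^bsub>M\<^esub>" using nilpotent n by blast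
    moreover have "x \<in> carrier R" using \<open>x \<in> p\<close> assms(2) by blast
    ultimately have "x \<odot>\<^bsub>M\<^esub> n = \<zero>\<^bsub>M\<^esub>"
      using nilpotent_in_maximal_annihilator[OF Z(2), of n] maximal[unfolded ann_def] n Z(1) by blast
    thus "x \<in> ann n" using \<open>x \<in> carrier R\<close> unfolding ann_def by blast
  qed
  thus ?thesis using ann_subset n unfolding ann_def by blast
qed

lemma submodule_sum_subset:
  fixes M :: "('a, 'b) module"
  assumes "module R M" "submodule W R M" "\<forall>T\<in>set Ts. T \<subseteq> W"
  shows "submodule_sum M Ts \<subseteq> W"
proof -
  interpret module R M by fact
  show ?thesis
    using assms(3)
  proof (induction Ts)
    case Nil
    show ?case using submoduleD(2)[OF assms(2)] by simp
  next
    case (Cons T Ts)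
    hence "T \<subseteq> W" "submodule_sum M Ts \<subseteq> W" by simp_all
    thus ?case using submoduleD(3)[OF assms(2)] by (auto simp del: submodule_sum.simps(1))
  qed
qed

lemma submodule_sum_submodule:
  fixes M :: "('a, 'b) module"
  assumes "module R M" "\<forall>T\<in>set Ts. submodule T R M"
  shows "submodule (submodule_sum M Ts) R M"
proof -
  interpret module R M by fact
  show ?thesis
    using assms(2)
  proof (induction Ts)
    case Nil
    show ?case using zero_submodule by simp
  next
    case (Cons T Ts)
    define S where "S = submodule_sum M Ts"
    have T: "submodule T R M" and S: "submodule S R M" using Cons unfolding S_def by auto
    have N: "x \<in> submodule_sum M (T # Ts) \<longleftrightarrow> (\<exists>a\<in>T. \<exists>b\<in>S. x = a \<oplus>\<^bsub>M\<^esub> b)" for x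
      unfolding S_def by auto
    note TD = submoduleD[OF T] and SD = submoduleD[OF S]
    show ?case
    proof (rule submoduleI', unfold N)
      show "submodule_sum M (T # Ts) \<subseteq> carrier M"
        using TD(1) SD(1) unfolding subset_iff N by auto
      show "\<exists>a\<in>T. \<exists>b\<in>S. \<zero>\<^bsub>M\<^esub> = a \<oplus>\<^bsub>M\<^esub> b"
        using TD(2) SD(2) by (intro bexI[of _ "\<zero>\<^bsub>M\<^esub>"]) simp_all
    next
      fix x y assume "\<exists>a\<in>T. \<exists>b\<in>S. x = a \<oplus>\<^bsub>M\<^esub> b" "\<exists>a\<in>T. \<exists>b\<in>S. y = a \<oplus>\<^bsub>M\<^esub> b"
      then obtain a b a' b' where ab: "x = a \<oplus>\<^bsub>M\<^esub> b" "y = a' \<oplus>\<^bsub>M\<^esub> b'"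
        "a \<in> T" "a' \<in> T" "b \<in> S" "b' \<in> S" by blast
      have "x \<oplus>\<^bsub>M\<^esub> y = (a \<oplus>\<^bsub>M\<^esub> a') \<oplus>\<^bsub>M\<^esub> (b \<oplus>\<^bsub>M\<^esub> b')"
        using ab TD(1) SD(1) by (simp add: subset_iff a_ac)
      thus "\<exists>c\<in>T. \<exists>d\<in>S. x \<oplus>\<^bsub>M\<^esub> y = c \<oplus>\<^bsub>M\<^esub> d" using ab TD(3) SD(3) by blast
    next
      fix r x assume r: "r \<in> carrier R" and "\<exists>a\<in>T. \<exists>b\<in>S. x = a \<oplus>\<^bsub>M\<^esub> b"
      then obtain a b where ab: "x = a \<oplus>\<^bsub>M\<^esub> b" "a \<in> T" "b \<in> S" by blast
      have "r \<odot>\<^bsub>M\<^esub> x = r \<odot>\<^bsub>M\<^esub> a \<oplus>\<^bsub>M\<^esub> r \<odot>\<^bsub>M\<^esub> b"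
        using ab r TD(1) SD(1) by (simp add: subset_iff smult_r_distr)
      thus "\<exists>c\<in>T. \<exists>d\<in>S. r \<odot>\<^bsub>M\<^esub> x = c \<oplus>\<^bsub>M\<^esub> d" using ab r TD(5) SD(5) by blast
    qed
  qed
qed

lemma submodule_sum_upper:
  fixes M :: "('a, 'b) module"
  assumes "module R M" "\<forall>T\<in>set Ts. submodule T R M" "T \<in> set Ts"
  shows "T \<subseteq> submodule_sum M Ts"
proof -
  interpret module R M by fact
  show ?thesis
    using assms(2,3)
  proof (induction Ts)
    case (Cons T' Ts)
    have T': "submodule T' R M" and S: "submodule (submodule_sum M Ts) R M"
      using Cons.prems submodule_sum_submodule[OF assms(1), of Ts] by auto
    show ?case
    proof
      fix t assume t: "t \<in> T"
      show "t \<in> submodule_sum M (T' # Ts)"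
      proof (cases "T = T'")
        case True
        hence "t \<in> carrier M" using t submoduleD(1)[OF T'] by blast
        hence "t = t \<oplus>\<^bsub>M\<^esub> \<zero>\<^bsub>M\<^esub>" by simp
        thus ?thesis using True t submoduleD(2)[OF S] by (auto simp del: r_zero)
      next
        case False
        hence "t \<in> submodule_sum M Ts" using Cons t by auto
        moreover from this have "t = \<zero>\<^bsub>M\<^esub> \<oplus>\<^bsub>M\<^esub> t" using submoduleD(1)[OF S] by auto
        ultimately show ?thesis using submoduleD(2)[OF T'] by (auto simp del: l_zero)
      qed
    qed
  qed simp
qed

section \<open>Radicals of colon ideals and decompositions\<close>

(* radical_colon R M N U is the radical of (U :_R N) = Ann(N/U).  For a primary U it is the
   prime associated with M/U; for a secondary S, radical_colon R M S {0} is the prime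
   attached to S. *)
definition radical_colon :: "('a, 'c) ring_scheme \<Rightarrow> ('a, 'b, 'd) module_scheme \<Rightarrow> 'b set \<Rightarrow> 'b set \<Rightarrow> 'a set" where
  "radical_colon R M N U = {x \<in> carrier R. \<exists>k::nat. \<forall>n\<in>N. (x [^]\<^bsub>R\<^esub> k) \<odot>\<^bsub>M\<^esub> n \<in> U}"

lemma (in module) radical_colon_eventually:
  assumes "x \<in> radical_colon R M N U" "N \<subseteq> carrier M"
    and "\<And>r n. r \<in> carrier R \<Longrightarrow> n \<in> N \<Longrightarrow> r \<odot>\<^bsub>M\<^esub> n \<in> N"
  shows "\<forall>\<^sub>F k in sequentially. \<forall>n\<in>N. (x [^]\<^bsub>R\<^esub> k) \<odot>\<^bsub>M\<^esub> n \<in> U"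
proof -
  obtain k0 :: nat where x: "x \<in> carrier R" and k0: "\<forall>n\<in>N. (x [^]\<^bsub>R\<^esub> k0) \<odot>\<^bsub>M\<^esub> n \<in> U"
    using assms(1) unfolding radical_colon_def by auto
  show ?thesis
  proof (rule eventually_sequentiallyI)
    fix k assume "k0 \<le> k"
    thus "\<forall>n\<in>N. (x [^]\<^bsub>R\<^esub> k) \<odot>\<^bsub>M\<^esub> n \<in> U"
      using smult_nat_pow_split[OF x] k0 assms(2,3) x by auto
  qed
qed

lemma radical_colon_mono:
  "N' \<subseteq> N \<Longrightarrow> U \<subseteq> U' \<Longrightarrow> radical_colon R M N U \<subseteq> radical_colon R M N' U'"
  unfolding radical_colon_def by blast

lemma (in module) radical_colon_of_subset:
  assumes "x \<in> carrier R" "N \<subseteq> carrier M" "N \<subseteq> U"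
  shows "x \<in> radical_colon R M N U"
proof -
  have "(x [^]\<^bsub>R\<^esub> (0::nat)) \<odot>\<^bsub>M\<^esub> n \<in> U" if "n \<in> N" for n
    using that assms(2,3) by (simp add: subset_iff)
  thus ?thesis unfolding radical_colon_def using assms(1) by blast
qed

lemma (in module) radical_colon_Inter:
  assumes "x \<in> carrier R" "finite \<U>" "\<forall>U\<in>\<U>. x \<in> radical_colon R M N U"
    and "N \<subseteq> carrier M" "\<And>r n. r \<in> carrier R \<Longrightarrow> n \<in> N \<Longrightarrow> r \<odot>\<^bsub>M\<^esub> n \<in> N"
  shows "x \<in> radical_colon R M N (\<Inter>\<U>)"
proof -
  have "\<forall>\<^sub>F k in sequentially. \<forall>U\<in>\<U>. \<forall>n\<in>N. (x [^]\<^bsub>R\<^esub> k) \<odot>\<^bsub>M\<^esub> n \<in> U"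
    using assms by (intro eventually_ball_finite ballI radical_colon_eventually) auto
  then obtain k :: nat where "\<forall>U\<in>\<U>. \<forall>n\<in>N. (x [^]\<^bsub>R\<^esub> k) \<odot>\<^bsub>M\<^esub> n \<in> U"
    unfolding eventually_sequentially by blast
  thus ?thesis unfolding radical_colon_def using assms(1) by blast
qed

lemma radical_colon_submodule_sum:
  fixes M :: "('a, 'b) module"
  assumes "module R M" "submodule P R M" "\<forall>S\<in>set Ss. submodule S R M"
    and "x \<in> carrier R" "\<forall>S\<in>set Ss. x \<in> radical_colon R M S P"
  shows "x \<in> radical_colon R M (submodule_sum M Ss) P"
proof -
  interpret module R M by fact
  have "\<forall>\<^sub>F k in sequentially. \<forall>S\<in>set Ss. \<forall>s\<in>S. (x [^]\<^bsub>R\<^esub> k) \<odot>\<^bsub>M\<^esub> s \<in> P"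
    using assms(3,5) submoduleD
    by (intro eventually_ball_finite ballI radical_colon_eventually) auto
  then obtain k :: nat where "\<forall>S\<in>set Ss. S \<subseteq> {m \<in> carrier M. (x [^]\<^bsub>R\<^esub> k) \<odot>\<^bsub>M\<^esub> m \<in> P}"
    unfolding eventually_sequentially using assms(3) submoduleD(1) by blast
  hence "submodule_sum M Ss \<subseteq> {m \<in> carrier M. (x [^]\<^bsub>R\<^esub> k) \<odot>\<^bsub>M\<^esub> m \<in> P}"
    using submodule_sum_subset[OF assms(1) smult_preimage_submodule] assms(2,4) by simp
  thus ?thesis unfolding radical_colon_def using assms(4) by blast
qed

lemma primary_annihilator_subset_radical:
  fixes M :: "('a, 'b) module"
  assumes "module R M" "primary_submodule R M U" "z \<in> carrier M" "z \<notin> U"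
  shows "{r \<in> carrier R. r \<odot>\<^bsub>M\<^esub> z = \<zero>\<^bsub>M\<^esub>} \<subseteq> radical_colon R M (carrier M) U"
proof
  interpret module R M by fact
  fix r assume "r \<in> {r \<in> carrier R. r \<odot>\<^bsub>M\<^esub> z = \<zero>\<^bsub>M\<^esub>}"
  hence "r \<in> carrier R" "r \<odot>\<^bsub>M\<^esub> z \<in> U"
    using submoduleD(2) assms(2) unfolding primary_submodule_def by auto
  thus "r \<in> radical_colon R M (carrier M) U"
    using assms(2-4) unfolding primary_submodule_def radical_colon_def by blast
qed

lemma annihilator_eq_of_primary_decomposition:
  fixes M :: "('a, 'b) module"
  assumes "module R M" "noetherian_ring R" "p \<subseteq> carrier R"
    and primary: "\<forall>U\<in>set Us. primary_submodule R M U"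
    and decomp: "carrier M \<inter> \<Inter>(set Us) = {\<zero>\<^bsub>M\<^esub>}"
    and "z1 \<in> carrier M \<inter> \<Inter>{U \<in> set Us. radical_colon R M (carrier M) U \<noteq> p}" "z1 \<noteq> \<zero>\<^bsub>M\<^esub>"
  shows "\<exists>z\<in>carrier M. {r \<in> carrier R. r \<odot>\<^bsub>M\<^esub> z = \<zero>\<^bsub>M\<^esub>} = p"
proof -
  interpret module R M by fact
  define Q where "Q = carrier M \<inter> \<Inter>{U \<in> set Us. radical_colon R M (carrier M) U \<noteq> p}"
  have "\<And>U. U \<in> set Us \<Longrightarrow> submodule U R M"
    using primary unfolding primary_submodule_def by blast
  hence Q: "submodule Q R M" unfolding Q_def by (intro Inter_submodule) blast
  note QD = submoduleD[OF Q]
  have "\<exists>z\<in>Q. {r \<in> carrier R. r \<odot>\<^bsub>M\<^esub> z = \<zero>\<^bsub>M\<^esub>} = p"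
  proof (rule exists_annihilator_eq[OF assms(2,3) QD(1) QD(5)])
    show "z1 \<in> Q" "z1 \<noteq> \<zero>\<^bsub>M\<^esub>" using assms(6,7) unfolding Q_def by auto
  next
    fix z assume z: "z \<in> Q" "z \<noteq> \<zero>\<^bsub>M\<^esub>"
    then obtain U where U: "U \<in> set Us" "z \<notin> U" using decomp QD(1) by blast
    hence "radical_colon R M (carrier M) U = p" using z(1) unfolding Q_def by blast
    thus "{r \<in> carrier R. r \<odot>\<^bsub>M\<^esub> z = \<zero>\<^bsub>M\<^esub>} \<subseteq> p"
      using primary_annihilator_subset_radical[OF assms(1)] primary U QD(1) z(1) by blast
  next
    fix x z assume "x \<in> p" "z \<in> Q"
    have "x \<in> radical_colon R M Q U" if "U \<in> set Us" for U
    proof (cases "radical_colon R M (carrier M) U = p")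
      case True
      thus ?thesis using \<open>x \<in> p\<close> radical_colon_mono[OF QD(1) order_refl, of R M U] by blast
    next
      case False
      hence "Q \<subseteq> U" using that unfolding Q_def by blast
      thus ?thesis using \<open>x \<in> p\<close> assms(3) QD(1) by (intro radical_colon_of_subset) auto
    qed
    hence "x \<in> radical_colon R M Q (\<Inter>(set Us))"
      using \<open>x \<in> p\<close> assms(3) QD(1,5) by (intro radical_colon_Inter) auto
    then obtain k :: nat where "\<forall>q\<in>Q. (x [^]\<^bsub>R\<^esub> k) \<odot>\<^bsub>M\<^esub> q \<in> \<Inter>(set Us)"
      unfolding radical_colon_def by blast
    thus "\<exists>k::nat. (x [^]\<^bsub>R\<^esub> k) \<odot>\<^bsub>M\<^esub> z = \<zero>\<^bsub>M\<^esub>"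
      using \<open>z \<in> Q\<close> QD(1,5) decomp \<open>x \<in> p\<close> assms(3) by blast
  qed
  thus ?thesis using QD(1) by blast
qed

lemma secondary_component_witness:
  fixes M :: "('a, 'b) module"
  assumes "module R M" and p: "primeideal p R" and U: "submodule U R M"
    and p_sub: "p \<subseteq> {r \<in> carrier R. \<forall>n\<in>carrier M. r \<odot>\<^bsub>M\<^esub> n \<in> U}"
    and S: "secondary_submodule R M S" and rad: "radical_colon R M S {\<zero>\<^bsub>M\<^esub>} \<noteq> p"
  shows "\<exists>a\<in>carrier R - p. \<forall>s\<in>S. a \<odot>\<^bsub>M\<^esub> s \<in> U"
proof -
  interpret module R M by fact
  have S_carrier: "S \<subseteq> carrier M" using S submoduleD(1) unfolding secondary_submodule_def by blast
  show ?thesis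
  proof (cases "radical_colon R M S {\<zero>\<^bsub>M\<^esub>} \<subseteq> p")
    case False
    then obtain a and k :: nat where a: "a \<in> carrier R" "a \<notin> p"
      and k: "\<forall>s\<in>S. (a [^]\<^bsub>R\<^esub> k) \<odot>\<^bsub>M\<^esub> s \<in> {\<zero>\<^bsub>M\<^esub>}"
      unfolding radical_colon_def by blast
    thus ?thesis using primeideal.nat_pow_notin[OF p] submoduleD(2)[OF U]
      by (intro bexI[of _ "a [^]\<^bsub>R\<^esub> k"]) auto
  next
    case True
    with rad obtain x where x: "x \<in> p" "x \<notin> radical_colon R M S {\<zero>\<^bsub>M\<^esub>}" by blast
    have xR: "x \<in> carrier R" using x(1) p_sub by blast
    hence "\<not> (\<exists>k::nat. \<forall>u\<in>S. (x [^]\<^bsub>R\<^esub> k) \<odot>\<^bsub>M\<^esub> u = \<zero>\<^bsub>M\<^esub>)"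
      using x(2) unfolding radical_colon_def by auto
    hence "\<forall>s\<in>S. \<exists>v\<in>S. x \<odot>\<^bsub>M\<^esub> v = s"
      using S xR unfolding secondary_submodule_def by blast
    \<comment> \<open>hence S = x S \<subseteq> x M \<subseteq> U\<close>
    moreover have "\<forall>n\<in>carrier M. x \<odot>\<^bsub>M\<^esub> n \<in> U" using x(1) p_sub by blast
    ultimately have "\<forall>s\<in>S. s \<in> U" using S_carrier by (metis subsetD)
    thus ?thesis using S_carrier primeideal.one_notin[OF p] by (intro bexI[of _ "\<one>\<^bsub>R\<^esub>"]) auto
  qed
qed

lemma secondary_decomposition_sum_proper:
  fixes M :: "('a, 'b) module"
  assumes "module R M" and p: "primeideal p R" and U: "submodule U R M"
    and p_eq: "p = {r \<in> carrier R. \<forall>n\<in>carrier M. r \<odot>\<^bsub>M\<^esub> n \<in> U}"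
    and secondary: "\<forall>S\<in>set Ss. secondary_submodule R M S"
  shows "submodule_sum M (U # filter (\<lambda>S. radical_colon R M S {\<zero>\<^bsub>M\<^esub>} \<noteq> p) Ss) \<noteq> carrier M"
    (is "submodule_sum M ?Ts \<noteq> _")
proof
  interpret module R M by fact
  assume sum_eq: "submodule_sum M ?Ts = carrier M"
  have Ts: "\<forall>T\<in>set ?Ts. submodule T R M"
    using U secondary unfolding secondary_submodule_def by auto
  have "\<exists>a\<in>carrier R - p. \<forall>T\<in>set ?Ts. \<forall>s\<in>T. a \<odot>\<^bsub>M\<^esub> s \<in> U"
  proof (rule primeideal.common_witness_outside[OF p])
    have "\<forall>s\<in>U. \<one>\<^bsub>R\<^esub> \<odot>\<^bsub>M\<^esub> s \<in> U" using submoduleD(1)[OF U] by auto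
    thus "\<forall>T\<in>set ?Ts. \<exists>a\<in>carrier R - p. \<forall>s\<in>T. a \<odot>\<^bsub>M\<^esub> s \<in> U"
      using secondary_component_witness[OF assms(1) p U] p_eq secondary primeideal.one_notin[OF p]
      by auto
    show "\<forall>T\<in>set ?Ts. \<forall>a\<in>carrier R. \<forall>b\<in>carrier R.
        (\<forall>s\<in>T. a \<odot>\<^bsub>M\<^esub> s \<in> U) \<longrightarrow> (\<forall>s\<in>T. (b \<otimes>\<^bsub>R\<^esub> a) \<odot>\<^bsub>M\<^esub> s \<in> U)"
      using Ts submoduleD(1) submoduleD(5)[OF U] by (fastforce simp: smult_assoc1)
  qed simp
  then obtain a where a: "a \<in> carrier R - p" "\<forall>T\<in>set ?Ts. T \<subseteq> {n \<in> carrier M. a \<odot>\<^bsub>M\<^esub> n \<in> U}"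
    using Ts submoduleD(1) by blast
  hence "submodule_sum M ?Ts \<subseteq> {n \<in> carrier M. a \<odot>\<^bsub>M\<^esub> n \<in> U}"
    by (intro submodule_sum_subset[OF assms(1) smult_preimage_submodule[OF _ U]]) auto
  thus False using sum_eq a p_eq by blast
qed

section \<open>The dual module Hom(M, E)\<close>

locale hom_modules = cring R + M: module R M + E: module R E
  for R :: "('a, 'c) ring_scheme" and M :: "('a, 'b) module" and E :: "('a, 'e) module"
begin

abbreviation D :: "('a, 'b \<Rightarrow> 'e) module" where "D \<equiv> Hom_mod R M E"

lemma Hom_mod_simps:
  "carrier D = lin_maps R M E"
  "\<zero>\<^bsub>D\<^esub> = (\<lambda>x\<in>carrier M. \<zero>\<^bsub>E\<^esub>)"
  "f \<oplus>\<^bsub>D\<^esub> g = (\<lambda>x\<in>carrier M. f x \<oplus>\<^bsub>E\<^esub> g x)"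
  "r \<odot>\<^bsub>D\<^esub> f = (\<lambda>x\<in>carrier M. r \<odot>\<^bsub>E\<^esub> f x)"
  by (simp_all add: Hom_mod_def)

lemma Hom_mod_apply [simp]:
  assumes "x \<in> carrier M"
  shows "\<zero>\<^bsub>D\<^esub> x = \<zero>\<^bsub>E\<^esub>" "(f \<oplus>\<^bsub>D\<^esub> g) x = f x \<oplus>\<^bsub>E\<^esub> g x" "(r \<odot>\<^bsub>D\<^esub> f) x = r \<odot>\<^bsub>E\<^esub> f x"
  using assms by (simp_all add: Hom_mod_simps)

lemma lin_mapsD:
  assumes "f \<in> carrier D"
  shows "f \<in> extensional (carrier M)" "\<And>x. x \<in> carrier M \<Longrightarrow> f x \<in> carrier E"
    "\<And>x y. x \<in> carrier M \<Longrightarrow> y \<in> carrier M \<Longrightarrow> f (x \<oplus>\<^bsub>M\<^esub> y) = f x \<oplus>\<^bsub>E\<^esub> f y"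
    "\<And>r x. r \<in> carrier R \<Longrightarrow> x \<in> carrier M \<Longrightarrow> f (r \<odot>\<^bsub>M\<^esub> x) = r \<odot>\<^bsub>E\<^esub> f x"
  using assms unfolding Hom_mod_simps lin_maps_def by (auto simp: PiE_iff)

lemma lin_mapsI:
  assumes "f \<in> extensional (carrier M)" "\<And>x. x \<in> carrier M \<Longrightarrow> f x \<in> carrier E"
    "\<And>x y. x \<in> carrier M \<Longrightarrow> y \<in> carrier M \<Longrightarrow> f (x \<oplus>\<^bsub>M\<^esub> y) = f x \<oplus>\<^bsub>E\<^esub> f y"
    "\<And>r x. r \<in> carrier R \<Longrightarrow> x \<in> carrier M \<Longrightarrow> f (r \<odot>\<^bsub>M\<^esub> x) = r \<odot>\<^bsub>E\<^esub> f x"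
  shows "f \<in> carrier D"
  using assms unfolding Hom_mod_simps lin_maps_def by (auto simp: PiE_iff)

lemma lin_maps_zero: "f \<in> carrier D \<Longrightarrow> f \<zero>\<^bsub>M\<^esub> = \<zero>\<^bsub>E\<^esub>"
  using lin_mapsD(4)[of f "\<zero>\<^bsub>R\<^esub>" "\<zero>\<^bsub>M\<^esub>"] lin_mapsD(2)[of f "\<zero>\<^bsub>M\<^esub>"] by simp

lemma lin_maps_eqI:
  assumes "f \<in> carrier D" "g \<in> carrier D" "\<And>x. x \<in> carrier M \<Longrightarrow> f x = g x"
  shows "f = g"
  using lin_mapsD(1)[OF assms(1)] lin_mapsD(1)[OF assms(2)] assms(3) by (rule extensionalityI)

lemma Hom_zero_closed: "\<zero>\<^bsub>D\<^esub> \<in> carrier D"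
  by (intro lin_mapsI) (auto simp: Hom_mod_simps)

lemma Hom_add_closed: "f \<in> carrier D \<Longrightarrow> g \<in> carrier D \<Longrightarrow> f \<oplus>\<^bsub>D\<^esub> g \<in> carrier D"
  by (intro lin_mapsI) (auto simp: lin_mapsD E.a_ac E.smult_r_distr Hom_mod_simps)

lemma Hom_smult_closed: "r \<in> carrier R \<Longrightarrow> f \<in> carrier D \<Longrightarrow> r \<odot>\<^bsub>D\<^esub> f \<in> carrier D"
  by (intro lin_mapsI)
    (auto simp: lin_mapsD E.smult_r_distr E.smult_assoc1[symmetric] m_comm Hom_mod_simps)

lemma Hom_abelian_group: "abelian_group D"
proof (rule abelian_groupI)
  fix x y z assume "x \<in> carrier D" "y \<in> carrier D" "z \<in> carrier D"
  thus "x \<oplus>\<^bsub>D\<^esub> y \<oplus>\<^bsub>D\<^esub> z = x \<oplus>\<^bsub>D\<^esub> (y \<oplus>\<^bsub>D\<^esub> z)"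
    by (intro ext) (auto simp: lin_mapsD E.a_ac Hom_mod_simps)
next
  fix x y assume "x \<in> carrier D" "y \<in> carrier D"
  thus "x \<oplus>\<^bsub>D\<^esub> y = y \<oplus>\<^bsub>D\<^esub> x"
    by (intro ext) (auto simp: lin_mapsD E.a_ac Hom_mod_simps)
next
  fix x assume x: "x \<in> carrier D"
  show "\<zero>\<^bsub>D\<^esub> \<oplus>\<^bsub>D\<^esub> x = x"
    using x Hom_add_closed Hom_zero_closed by (intro lin_maps_eqI) (auto simp: lin_mapsD)
  have "(\<lambda>y\<in>carrier M. \<ominus>\<^bsub>E\<^esub> x y) \<in> carrier D"
    using x by (intro lin_mapsI) (auto simp: lin_mapsD E.minus_add E.smult_r_minus)
  moreover have "(\<lambda>y\<in>carrier M. \<ominus>\<^bsub>E\<^esub> x y) \<oplus>\<^bsub>D\<^esub> x = \<zero>\<^bsub>D\<^esub>"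
    using x by (intro ext) (auto simp: lin_mapsD E.l_neg Hom_mod_simps)
  ultimately show "\<exists>y\<in>carrier D. y \<oplus>\<^bsub>D\<^esub> x = \<zero>\<^bsub>D\<^esub>" by blast
qed (use Hom_add_closed Hom_zero_closed in auto)

lemma Hom_module: "module R D"
proof (rule moduleI[OF is_cring Hom_abelian_group])
  fix a b x y assume "a \<in> carrier R" "b \<in> carrier R" "x \<in> carrier D" "y \<in> carrier D"
  thus "(a \<oplus>\<^bsub>R\<^esub> b) \<odot>\<^bsub>D\<^esub> x = a \<odot>\<^bsub>D\<^esub> x \<oplus>\<^bsub>D\<^esub> b \<odot>\<^bsub>D\<^esub> x"
    and "a \<odot>\<^bsub>D\<^esub> (x \<oplus>\<^bsub>D\<^esub> y) = a \<odot>\<^bsub>D\<^esub> x \<oplus>\<^bsub>D\<^esub> a \<odot>\<^bsub>D\<^esub> y"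
    and "(a \<otimes>\<^bsub>R\<^esub> b) \<odot>\<^bsub>D\<^esub> x = a \<odot>\<^bsub>D\<^esub> (b \<odot>\<^bsub>D\<^esub> x)"
    by (auto intro!: ext simp: lin_mapsD E.smult_l_distr E.smult_r_distr E.smult_assoc1 Hom_mod_simps)
next
  fix x assume "x \<in> carrier D"
  thus "\<one>\<^bsub>R\<^esub> \<odot>\<^bsub>D\<^esub> x = x"
    using Hom_smult_closed by (intro lin_maps_eqI) (auto simp: lin_mapsD)
qed (rule Hom_smult_closed)

sublocale D: module R D
  by (rule Hom_module)

lemma Hom_eq_zero_iff:
  assumes "f \<in> carrier D"
  shows "f = \<zero>\<^bsub>D\<^esub> \<longleftrightarrow> (\<forall>x\<in>carrier M. f x = \<zero>\<^bsub>E\<^esub>)"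
  using lin_maps_eqI[OF assms D.zero_closed] by auto

lemma Hom_smult_eq_zero_iff:
  assumes "r \<in> carrier R" "f \<in> carrier D"
  shows "r \<odot>\<^bsub>D\<^esub> f = \<zero>\<^bsub>D\<^esub> \<longleftrightarrow> (\<forall>x\<in>carrier M. f (r \<odot>\<^bsub>M\<^esub> x) = \<zero>\<^bsub>E\<^esub>)"
  using Hom_eq_zero_iff[OF D.smult_closed[OF assms]] assms by (simp add: lin_mapsD)

lemma Hom_minus_apply:
  assumes "f \<in> carrier D" "x \<in> carrier M"
  shows "(\<ominus>\<^bsub>D\<^esub> f) x = \<ominus>\<^bsub>E\<^esub> f x"
proof -
  have "\<ominus>\<^bsub>D\<^esub> f = (\<ominus>\<^bsub>R\<^esub> \<one>\<^bsub>R\<^esub>) \<odot>\<^bsub>D\<^esub> f" using D.smult_l_minus[of "\<one>\<^bsub>R\<^esub>" f] assms(1) by simp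
  thus ?thesis using assms lin_mapsD(2) by (simp add: E.smult_l_minus)
qed

lemma kernel_submodule:
  assumes "f \<in> carrier D"
  shows "submodule {x \<in> carrier M. f x = \<zero>\<^bsub>E\<^esub>} R M"
  by (rule M.submoduleI') (use lin_maps_zero[OF assms] in \<open>auto simp: lin_mapsD[OF assms]\<close>)

lemma Ass_Hom_subset_Att: "Ass R D \<subseteq> Att R M"
proof
  fix p assume "p \<in> Ass R D"
  then obtain f where p: "primeideal p R" and f: "f \<in> carrier D"
    and p_ann: "p = {r \<in> carrier R. r \<odot>\<^bsub>D\<^esub> f = \<zero>\<^bsub>D\<^esub>}"
    unfolding Ass_def by blast
  have "p = {r \<in> carrier R. \<forall>x\<in>carrier M. r \<odot>\<^bsub>M\<^esub> x \<in> {x \<in> carrier M. f x = \<zero>\<^bsub>E\<^esub>}}"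
    unfolding p_ann using Hom_smult_eq_zero_iff[OF _ f] by auto
  thus "p \<in> Att R M" unfolding Att_def using p kernel_submodule[OF f] by blast
qed

lemma Hom_nonzero_on_summand:
  assumes "\<forall>S\<in>set Ss. submodule S R M" "submodule_sum M Ss = carrier M"
    and "f \<in> carrier D" "f \<noteq> \<zero>\<^bsub>D\<^esub>"
  shows "\<exists>S\<in>set Ss. \<exists>s\<in>S. f s \<noteq> \<zero>\<^bsub>E\<^esub>"
proof (rule ccontr)
  assume "\<not> ?thesis"
  hence "\<forall>S\<in>set Ss. S \<subseteq> {x \<in> carrier M. f x = \<zero>\<^bsub>E\<^esub>}"
    using assms(1) M.submoduleD(1) by blast
  hence "submodule_sum M Ss \<subseteq> {x \<in> carrier M. f x = \<zero>\<^bsub>E\<^esub>}"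
    by (rule submodule_sum_subset[OF M.module_axioms kernel_submodule[OF assms(3)]])
  thus False using assms(2-4) Hom_eq_zero_iff by blast
qed

lemma Hom_annihilator_subset_of_secondary:
  assumes secondary: "\<forall>S\<in>set Ss. secondary_submodule R M S"
    and decomp: "submodule_sum M Ss = carrier M"
    and P: "\<forall>S\<in>set Ss. radical_colon R M S {\<zero>\<^bsub>M\<^esub>} \<noteq> p \<longrightarrow> S \<subseteq> P"
    and f: "f \<in> carrier D" "\<forall>u\<in>P. f u = \<zero>\<^bsub>E\<^esub>" "f \<noteq> \<zero>\<^bsub>D\<^esub>"
  shows "{r \<in> carrier R. r \<odot>\<^bsub>D\<^esub> f = \<zero>\<^bsub>D\<^esub>} \<subseteq> p"
proof
  have S: "\<And>S. S \<in> set Ss \<Longrightarrow> submodule S R M"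
    using secondary unfolding secondary_submodule_def by blast
  obtain S s where s: "S \<in> set Ss" "s \<in> S" "f s \<noteq> \<zero>\<^bsub>E\<^esub>"
    using Hom_nonzero_on_summand[OF _ decomp f(1,3)] S by blast
  hence rad: "radical_colon R M S {\<zero>\<^bsub>M\<^esub>} = p" using P f(2) by blast
  fix r assume "r \<in> {r \<in> carrier R. r \<odot>\<^bsub>D\<^esub> f = \<zero>\<^bsub>D\<^esub>}"
  hence r: "r \<in> carrier R" "\<forall>x\<in>carrier M. f (r \<odot>\<^bsub>M\<^esub> x) = \<zero>\<^bsub>E\<^esub>"
    using Hom_smult_eq_zero_iff f(1) by auto
  show "r \<in> p"
  proof (rule ccontr)
    assume "r \<notin> p"
    hence "\<forall>u\<in>S. \<exists>v\<in>S. r \<odot>\<^bsub>M\<^esub> v = u"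
      using secondary s(1) rad r(1) unfolding secondary_submodule_def radical_colon_def by auto
    then obtain v where "v \<in> S" "r \<odot>\<^bsub>M\<^esub> v = s" using s(2) by blast
    thus False using r(2) s M.submoduleD(1)[OF S[OF s(1)]] by blast
  qed
qed

lemma annihilator_eq_of_secondary_decomposition:
  assumes "noetherian_ring R" "p \<subseteq> carrier R"
    and secondary: "\<forall>S\<in>set Ss. secondary_submodule R M S"
    and decomp: "submodule_sum M Ss = carrier M"
    and P: "submodule P R M" "\<forall>S\<in>set Ss. radical_colon R M S {\<zero>\<^bsub>M\<^esub>} \<noteq> p \<longrightarrow> S \<subseteq> P"
    and "f1 \<in> carrier D" "\<forall>u\<in>P. f1 u = \<zero>\<^bsub>E\<^esub>" "f1 \<noteq> \<zero>\<^bsub>D\<^esub>"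
  shows "\<exists>f\<in>carrier D. {r \<in> carrier R. r \<odot>\<^bsub>D\<^esub> f = \<zero>\<^bsub>D\<^esub>} = p"
proof -
  have S: "\<And>S. S \<in> set Ss \<Longrightarrow> submodule S R M"
    using secondary unfolding secondary_submodule_def by blast
  define Z where "Z = {f \<in> carrier D. \<forall>u\<in>P. f u = \<zero>\<^bsub>E\<^esub>}"
  have "\<exists>f\<in>Z. {r \<in> carrier R. r \<odot>\<^bsub>D\<^esub> f = \<zero>\<^bsub>D\<^esub>} = p"
  proof (rule D.exists_annihilator_eq[OF assms(1,2)])
    show "Z \<subseteq> carrier D" unfolding Z_def by blast
    show "r \<odot>\<^bsub>D\<^esub> f \<in> Z" if "r \<in> carrier R" "f \<in> Z" for r f
      using that M.submoduleD(1)[OF P(1)] unfolding Z_def by auto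
    show "f1 \<in> Z" "f1 \<noteq> \<zero>\<^bsub>D\<^esub>" using assms(7-9) unfolding Z_def by auto
  next
    fix f assume "f \<in> Z" "f \<noteq> \<zero>\<^bsub>D\<^esub>"
    thus "{r \<in> carrier R. r \<odot>\<^bsub>D\<^esub> f = \<zero>\<^bsub>D\<^esub>} \<subseteq> p"
      using Hom_annihilator_subset_of_secondary[OF secondary decomp P(2)] unfolding Z_def by blast
  next
    fix x f assume "x \<in> p" "f \<in> Z"
    hence x: "x \<in> carrier R" using assms(2) by blast
    have "x \<in> radical_colon R M S P" if "S \<in> set Ss" for S
    proof (cases "radical_colon R M S {\<zero>\<^bsub>M\<^esub>} = p")
      case True
      thus ?thesis
        using \<open>x \<in> p\<close> radical_colon_mono[OF order_refl, of "{\<zero>\<^bsub>M\<^esub>}" P R M S]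
          M.submoduleD(2)[OF P(1)] by blast
    next
      case False
      thus ?thesis using that P(2) x M.submoduleD(1)[OF S[OF that]]
        by (intro M.radical_colon_of_subset) auto
    qed
    hence "x \<in> radical_colon R M (submodule_sum M Ss) P"
      using S x by (intro radical_colon_submodule_sum[OF M.module_axioms P(1)]) auto
    then obtain k :: nat where "\<forall>m\<in>carrier M. (x [^]\<^bsub>R\<^esub> k) \<odot>\<^bsub>M\<^esub> m \<in> P"
      using decomp unfolding radical_colon_def by auto
    thus "\<exists>k::nat. (x [^]\<^bsub>R\<^esub> k) \<odot>\<^bsub>D\<^esub> f = \<zero>\<^bsub>D\<^esub>"
      using Hom_smult_eq_zero_iff[of "x [^]\<^bsub>R\<^esub> k" f] \<open>f \<in> Z\<close> x unfolding Z_def by auto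
  qed
  thus ?thesis unfolding Z_def by blast
qed

section \<open>Extending linear maps into an injective module\<close>

(* Graphs of R-linear maps from a submodule of M to E, i.e. partial linear maps; the last
   clause makes the relation functional. *)
definition linear_graph :: "('b \<times> 'e) set \<Rightarrow> bool" where
  "linear_graph G \<longleftrightarrow> G \<subseteq> carrier M \<times> carrier E \<and> (\<zero>\<^bsub>M\<^esub>, \<zero>\<^bsub>E\<^esub>) \<in> G \<and>
     (\<forall>a b a' b'. (a, b) \<in> G \<longrightarrow> (a', b') \<in> G \<longrightarrow> (a \<oplus>\<^bsub>M\<^esub> a', b \<oplus>\<^bsub>E\<^esub> b') \<in> G) \<and>
     (\<forall>r a b. r \<in> carrier R \<longrightarrow> (a, b) \<in> G \<longrightarrow> (r \<odot>\<^bsub>M\<^esub> a, r \<odot>\<^bsub>E\<^esub> b) \<in> G) \<and>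
     (\<forall>b. (\<zero>\<^bsub>M\<^esub>, b) \<in> G \<longrightarrow> b = \<zero>\<^bsub>E\<^esub>)"

lemma linear_graphI:
  assumes "G \<subseteq> carrier M \<times> carrier E" "(\<zero>\<^bsub>M\<^esub>, \<zero>\<^bsub>E\<^esub>) \<in> G"
    and "\<And>a b a' b'. (a, b) \<in> G \<Longrightarrow> (a', b') \<in> G \<Longrightarrow> (a \<oplus>\<^bsub>M\<^esub> a', b \<oplus>\<^bsub>E\<^esub> b') \<in> G"
    and "\<And>r a b. r \<in> carrier R \<Longrightarrow> (a, b) \<in> G \<Longrightarrow> (r \<odot>\<^bsub>M\<^esub> a, r \<odot>\<^bsub>E\<^esub> b) \<in> G"
    and "\<And>b. (\<zero>\<^bsub>M\<^esub>, b) \<in> G \<Longrightarrow> b = \<zero>\<^bsub>E\<^esub>"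
  shows "linear_graph G"
  unfolding linear_graph_def using assms by blast

lemma linear_graphD:
  assumes "linear_graph G"
  shows "G \<subseteq> carrier M \<times> carrier E" "(\<zero>\<^bsub>M\<^esub>, \<zero>\<^bsub>E\<^esub>) \<in> G"
    and "\<And>a b a' b'. (a, b) \<in> G \<Longrightarrow> (a', b') \<in> G \<Longrightarrow> (a \<oplus>\<^bsub>M\<^esub> a', b \<oplus>\<^bsub>E\<^esub> b') \<in> G"
    and "\<And>r a b. r \<in> carrier R \<Longrightarrow> (a, b) \<in> G \<Longrightarrow> (r \<odot>\<^bsub>M\<^esub> a, r \<odot>\<^bsub>E\<^esub> b) \<in> G"
    and "\<And>b. (\<zero>\<^bsub>M\<^esub>, b) \<in> G \<Longrightarrow> b = \<zero>\<^bsub>E\<^esub>"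
  using assms unfolding linear_graph_def by blast+

lemma linear_graph_functional:
  assumes G: "linear_graph G" and "(a, b) \<in> G" "(a, b') \<in> G"
  shows "b = b'"
proof -
  have carr: "a \<in> carrier M" "b \<in> carrier E" "b' \<in> carrier E"
    using linear_graphD(1)[OF G] assms(2,3) by auto
  have "((\<ominus>\<^bsub>R\<^esub> \<one>\<^bsub>R\<^esub>) \<odot>\<^bsub>M\<^esub> a, (\<ominus>\<^bsub>R\<^esub> \<one>\<^bsub>R\<^esub>) \<odot>\<^bsub>E\<^esub> b') \<in> G"
    using linear_graphD(4)[OF G _ assms(3)] by simp
  hence "(\<ominus>\<^bsub>M\<^esub> a, \<ominus>\<^bsub>E\<^esub> b') \<in> G" using carr by (simp add: M.smult_l_minus E.smult_l_minus)
  hence "(a \<oplus>\<^bsub>M\<^esub> \<ominus>\<^bsub>M\<^esub> a, b \<oplus>\<^bsub>E\<^esub> \<ominus>\<^bsub>E\<^esub> b') \<in> G" using linear_graphD(3)[OF G assms(2)] by blast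
  hence diff: "b \<oplus>\<^bsub>E\<^esub> \<ominus>\<^bsub>E\<^esub> b' = \<zero>\<^bsub>E\<^esub>" using carr linear_graphD(5)[OF G] by (simp add: M.r_neg)
  have "b = (b \<oplus>\<^bsub>E\<^esub> \<ominus>\<^bsub>E\<^esub> b') \<oplus>\<^bsub>E\<^esub> b'" using carr by (simp add: E.a_assoc E.l_neg)
  thus ?thesis using diff carr by simp
qed

lemma linear_graph_Domain_submodule:
  assumes "linear_graph G"
  shows "submodule (Domain G) R M"
proof (rule M.submoduleI')
  show "Domain G \<subseteq> carrier M" "\<zero>\<^bsub>M\<^esub> \<in> Domain G" using linear_graphD(1,2)[OF assms] by auto
  show "a \<oplus>\<^bsub>M\<^esub> a' \<in> Domain G" if "a \<in> Domain G" "a' \<in> Domain G" for a a'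
    using that linear_graphD(3)[OF assms] by blast
  show "r \<odot>\<^bsub>M\<^esub> a \<in> Domain G" if "r \<in> carrier R" "a \<in> Domain G" for r a
    using that linear_graphD(4)[OF assms] by blast
qed

lemma linear_graph_chain_Union:
  assumes "C \<noteq> {}" "subset.chain {G. linear_graph G} C"
  shows "linear_graph (\<Union>C)"
proof -
  have G: "\<And>G. G \<in> C \<Longrightarrow> linear_graph G"
    and total: "\<And>G H. G \<in> C \<Longrightarrow> H \<in> C \<Longrightarrow> G \<subseteq> H \<or> H \<subseteq> G"
    using assms(2) unfolding subset_chain_def by auto
  obtain G0 where "G0 \<in> C" using assms(1) by blast
  show ?thesis
  proof (rule linear_graphI)
    show "\<Union>C \<subseteq> carrier M \<times> carrier E" using linear_graphD(1)[OF G] by blast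
    show "(\<zero>\<^bsub>M\<^esub>, \<zero>\<^bsub>E\<^esub>) \<in> \<Union>C" using linear_graphD(2)[OF G] \<open>G0 \<in> C\<close> by blast
  next
    fix a b a' b' assume "(a, b) \<in> \<Union>C" "(a', b') \<in> \<Union>C"
    then obtain G1 G2 where G12: "G1 \<in> C" "G2 \<in> C" "(a, b) \<in> G1" "(a', b') \<in> G2" by blast
    from total[OF G12(1,2)] show "(a \<oplus>\<^bsub>M\<^esub> a', b \<oplus>\<^bsub>E\<^esub> b') \<in> \<Union>C"
    proof
      assume "G1 \<subseteq> G2"
      thus ?thesis using G12 linear_graphD(3)[OF G[OF G12(2)]] by blast
    next
      assume "G2 \<subseteq> G1"
      thus ?thesis using G12 linear_graphD(3)[OF G[OF G12(1)]] by blast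
    qed
  next
    fix r a b assume "r \<in> carrier R" "(a, b) \<in> \<Union>C"
    thus "(r \<odot>\<^bsub>M\<^esub> a, r \<odot>\<^bsub>E\<^esub> b) \<in> \<Union>C" using linear_graphD(4)[OF G] by blast
  next
    fix b assume "(\<zero>\<^bsub>M\<^esub>, b) \<in> \<Union>C"
    thus "b = \<zero>\<^bsub>E\<^esub>" using linear_graphD(5)[OF G] by blast
  qed
qed

lemma linear_graph_total_lin_map:
  assumes G: "linear_graph G" and total: "carrier M \<subseteq> Domain G"
  shows "\<exists>f\<in>carrier D. \<forall>a b. (a, b) \<in> G \<longrightarrow> f a = b"
proof -
  define f where "f = (\<lambda>x\<in>carrier M. THE b. (x, b) \<in> G)"
  have f_eq: "f a = b" if "(a, b) \<in> G" for a b
  proof -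
    have "a \<in> carrier M" using that linear_graphD(1)[OF G] by blast
    hence "f a = (THE b. (a, b) \<in> G)" unfolding f_def by simp
    also have "\<dots> = b"
      using that by (rule the_equality) (use linear_graph_functional[OF G that] in auto)
    finally show ?thesis .
  qed
  have f_graph: "(x, f x) \<in> G" if "x \<in> carrier M" for x
    using that total f_eq by blast
  have "f \<in> carrier D"
  proof (rule lin_mapsI)
    show "f \<in> extensional (carrier M)" unfolding f_def by simp
    show "f x \<in> carrier E" if "x \<in> carrier M" for x
      using f_graph[OF that] linear_graphD(1)[OF G] by blast
    show "f (x \<oplus>\<^bsub>M\<^esub> y) = f x \<oplus>\<^bsub>E\<^esub> f y" if "x \<in> carrier M" "y \<in> carrier M" for x y
      using f_eq[OF linear_graphD(3)[OF G f_graph f_graph]] that by blast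
    show "f (r \<odot>\<^bsub>M\<^esub> x) = r \<odot>\<^bsub>E\<^esub> f x" if "r \<in> carrier R" "x \<in> carrier M" for r x
      using f_eq[OF linear_graphD(4)[OF G that(1) f_graph[OF that(2)]]] .
  qed
  thus ?thesis using f_eq by blast
qed

definition graph_adjoin :: "('b \<times> 'e) set \<Rightarrow> 'b \<Rightarrow> 'e \<Rightarrow> ('b \<times> 'e) set" where
  "graph_adjoin H m e = {(a \<oplus>\<^bsub>M\<^esub> r \<odot>\<^bsub>M\<^esub> m, b \<oplus>\<^bsub>E\<^esub> r \<odot>\<^bsub>E\<^esub> e) | a b r. (a, b) \<in> H \<and> r \<in> carrier R}"

lemma graph_adjoin_superset:
  assumes H: "linear_graph H" and m: "m \<in> carrier M" and e: "e \<in> carrier E"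
  shows "H \<subseteq> graph_adjoin H m e" "(m, e) \<in> graph_adjoin H m e"
proof -
  show "H \<subseteq> graph_adjoin H m e"
  proof (rule subrelI)
    fix a b assume ab: "(a, b) \<in> H"
    hence "(a \<oplus>\<^bsub>M\<^esub> \<zero>\<^bsub>R\<^esub> \<odot>\<^bsub>M\<^esub> m, b \<oplus>\<^bsub>E\<^esub> \<zero>\<^bsub>R\<^esub> \<odot>\<^bsub>E\<^esub> e) \<in> graph_adjoin H m e"
      unfolding graph_adjoin_def by (intro CollectI exI[of _ a] exI[of _ b] exI[of _ "\<zero>\<^bsub>R\<^esub>"]) simp
    moreover have "a \<in> carrier M" "b \<in> carrier E" using ab linear_graphD(1)[OF H] by auto
    ultimately show "(a, b) \<in> graph_adjoin H m e" using m e by simp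
  qed
  have "(\<zero>\<^bsub>M\<^esub> \<oplus>\<^bsub>M\<^esub> \<one>\<^bsub>R\<^esub> \<odot>\<^bsub>M\<^esub> m, \<zero>\<^bsub>E\<^esub> \<oplus>\<^bsub>E\<^esub> \<one>\<^bsub>R\<^esub> \<odot>\<^bsub>E\<^esub> e) \<in> graph_adjoin H m e"
    unfolding graph_adjoin_def using linear_graphD(2)[OF H]
    by (intro CollectI exI[of _ "\<zero>\<^bsub>M\<^esub>"] exI[of _ "\<zero>\<^bsub>E\<^esub>"] exI[of _ "\<one>\<^bsub>R\<^esub>"]) simp
  thus "(m, e) \<in> graph_adjoin H m e" using m e by simp
qed

lemma linear_graph_adjoin:
  assumes H: "linear_graph H" and m: "m \<in> carrier M" and e: "e \<in> carrier E"
    and compatible: "\<forall>r\<in>carrier R. \<forall>b. (r \<odot>\<^bsub>M\<^esub> m, b) \<in> H \<longrightarrow> b = r \<odot>\<^bsub>E\<^esub> e"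
  shows "linear_graph (graph_adjoin H m e)"
proof (rule linear_graphI)
  show "graph_adjoin H m e \<subseteq> carrier M \<times> carrier E"
    using linear_graphD(1)[OF H] m e unfolding graph_adjoin_def by fastforce
  show "(\<zero>\<^bsub>M\<^esub>, \<zero>\<^bsub>E\<^esub>) \<in> graph_adjoin H m e"
    using graph_adjoin_superset(1)[OF H m e] linear_graphD(2)[OF H] by blast
next
  fix x y x' y' assume "(x, y) \<in> graph_adjoin H m e" "(x', y') \<in> graph_adjoin H m e"
  then obtain a b r a' b' r' where ab: "x = a \<oplus>\<^bsub>M\<^esub> r \<odot>\<^bsub>M\<^esub> m" "y = b \<oplus>\<^bsub>E\<^esub> r \<odot>\<^bsub>E\<^esub> e"
    "x' = a' \<oplus>\<^bsub>M\<^esub> r' \<odot>\<^bsub>M\<^esub> m" "y' = b' \<oplus>\<^bsub>E\<^esub> r' \<odot>\<^bsub>E\<^esub> e"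
    "(a, b) \<in> H" "(a', b') \<in> H" "r \<in> carrier R" "r' \<in> carrier R"
    unfolding graph_adjoin_def by blast
  have "a \<in> carrier M" "a' \<in> carrier M" "b \<in> carrier E" "b' \<in> carrier E"
    using ab(5,6) linear_graphD(1)[OF H] by auto
  hence "x \<oplus>\<^bsub>M\<^esub> x' = (a \<oplus>\<^bsub>M\<^esub> a') \<oplus>\<^bsub>M\<^esub> (r \<oplus>\<^bsub>R\<^esub> r') \<odot>\<^bsub>M\<^esub> m"
    "y \<oplus>\<^bsub>E\<^esub> y' = (b \<oplus>\<^bsub>E\<^esub> b') \<oplus>\<^bsub>E\<^esub> (r \<oplus>\<^bsub>R\<^esub> r') \<odot>\<^bsub>E\<^esub> e"
    using ab m e by (auto simp: M.smult_l_distr E.smult_l_distr M.a_ac E.a_ac)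
  thus "(x \<oplus>\<^bsub>M\<^esub> x', y \<oplus>\<^bsub>E\<^esub> y') \<in> graph_adjoin H m e"
    unfolding graph_adjoin_def using linear_graphD(3)[OF H ab(5,6)] ab(7,8) by blast
next
  fix s x y assume s: "s \<in> carrier R" and "(x, y) \<in> graph_adjoin H m e"
  then obtain a b r where ab: "x = a \<oplus>\<^bsub>M\<^esub> r \<odot>\<^bsub>M\<^esub> m" "y = b \<oplus>\<^bsub>E\<^esub> r \<odot>\<^bsub>E\<^esub> e"
    "(a, b) \<in> H" "r \<in> carrier R" unfolding graph_adjoin_def by blast
  have "a \<in> carrier M" "b \<in> carrier E" using ab(3) linear_graphD(1)[OF H] by auto
  hence "s \<odot>\<^bsub>M\<^esub> x = s \<odot>\<^bsub>M\<^esub> a \<oplus>\<^bsub>M\<^esub> (s \<otimes>\<^bsub>R\<^esub> r) \<odot>\<^bsub>M\<^esub> m"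
    "s \<odot>\<^bsub>E\<^esub> y = s \<odot>\<^bsub>E\<^esub> b \<oplus>\<^bsub>E\<^esub> (s \<otimes>\<^bsub>R\<^esub> r) \<odot>\<^bsub>E\<^esub> e"
    using ab s m e by (auto simp: M.smult_r_distr E.smult_r_distr M.smult_assoc1 E.smult_assoc1)
  thus "(s \<odot>\<^bsub>M\<^esub> x, s \<odot>\<^bsub>E\<^esub> y) \<in> graph_adjoin H m e"
    unfolding graph_adjoin_def using linear_graphD(4)[OF H s ab(3)] ab(4) s by blast
next
  fix y assume "(\<zero>\<^bsub>M\<^esub>, y) \<in> graph_adjoin H m e"
  then obtain a b r where ab: "\<zero>\<^bsub>M\<^esub> = a \<oplus>\<^bsub>M\<^esub> r \<odot>\<^bsub>M\<^esub> m" "y = b \<oplus>\<^bsub>E\<^esub> r \<odot>\<^bsub>E\<^esub> e"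
    "(a, b) \<in> H" "r \<in> carrier R" unfolding graph_adjoin_def by blast
  have "a \<in> carrier M" "b \<in> carrier E" using ab(3) linear_graphD(1)[OF H] by auto
  hence "a = (\<ominus>\<^bsub>R\<^esub> r) \<odot>\<^bsub>M\<^esub> m"
    using ab(1) m ab(4) by (metis M.add.inv_equality M.smult_closed M.smult_l_minus)
  hence "b = (\<ominus>\<^bsub>R\<^esub> r) \<odot>\<^bsub>E\<^esub> e" using compatible ab(3,4) by auto
  hence "b = \<ominus>\<^bsub>E\<^esub> (r \<odot>\<^bsub>E\<^esub> e)" using ab(4) e by (simp add: E.smult_l_minus)
  thus "y = \<zero>\<^bsub>E\<^esub>" using ab(2,4) e by (simp add: E.l_neg)
qed

lemma linear_graph_zero:
  assumes "submodule P R M"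
  shows "linear_graph (P \<times> {\<zero>\<^bsub>E\<^esub>})"
  using M.submoduleD[OF assms] by (intro linear_graphI) auto

lemma linear_graph_smult_pairs:
  assumes x: "x \<in> carrier R" and g: "g \<in> carrier D"
    and ker: "\<forall>m\<in>carrier M. x \<odot>\<^bsub>M\<^esub> m = \<zero>\<^bsub>M\<^esub> \<longrightarrow> g m = \<zero>\<^bsub>E\<^esub>"
  shows "linear_graph {(x \<odot>\<^bsub>M\<^esub> m, g m) | m. m \<in> carrier M}" (is "linear_graph ?G")
proof (rule linear_graphI)
  show "?G \<subseteq> carrier M \<times> carrier E" using x lin_mapsD(2)[OF g] by auto
  have "(x \<odot>\<^bsub>M\<^esub> \<zero>\<^bsub>M\<^esub>, g \<zero>\<^bsub>M\<^esub>) \<in> ?G" by blast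
  thus "(\<zero>\<^bsub>M\<^esub>, \<zero>\<^bsub>E\<^esub>) \<in> ?G" using x lin_maps_zero[OF g] by simp
next
  fix a b a' b' assume "(a, b) \<in> ?G" "(a', b') \<in> ?G"
  then obtain m m' where "a = x \<odot>\<^bsub>M\<^esub> m" "b = g m" "a' = x \<odot>\<^bsub>M\<^esub> m'" "b' = g m'"
    "m \<in> carrier M" "m' \<in> carrier M" by blast
  moreover from this have "(x \<odot>\<^bsub>M\<^esub> (m \<oplus>\<^bsub>M\<^esub> m'), g (m \<oplus>\<^bsub>M\<^esub> m')) \<in> ?G" by blast
  ultimately show "(a \<oplus>\<^bsub>M\<^esub> a', b \<oplus>\<^bsub>E\<^esub> b') \<in> ?G" using x by (simp add: M.smult_r_distr lin_mapsD[OF g])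
next
  fix r a b assume r: "r \<in> carrier R" and "(a, b) \<in> ?G"
  then obtain m where "a = x \<odot>\<^bsub>M\<^esub> m" "b = g m" "m \<in> carrier M" by blast
  moreover from this have "(x \<odot>\<^bsub>M\<^esub> (r \<odot>\<^bsub>M\<^esub> m), g (r \<odot>\<^bsub>M\<^esub> m)) \<in> ?G" using r by blast
  ultimately show "(r \<odot>\<^bsub>M\<^esub> a, r \<odot>\<^bsub>E\<^esub> b) \<in> ?G"
    using x r by (simp add: M.smult_assoc1[symmetric] m_comm lin_mapsD[OF g])
next
  fix b assume "(\<zero>\<^bsub>M\<^esub>, b) \<in> ?G"
  thus "b = \<zero>\<^bsub>E\<^esub>" using ker by auto
qed

lemma linear_graph_sum_pairs:
  assumes A: "submodule A R M" and B: "submodule B R M" and f: "f \<in> carrier D"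
    and vanish: "\<forall>y\<in>A \<inter> B. f y = \<zero>\<^bsub>E\<^esub>"
  shows "linear_graph {(a \<oplus>\<^bsub>M\<^esub> b, f a) | a b. a \<in> A \<and> b \<in> B}" (is "linear_graph ?G")
proof -
  note AD = M.submoduleD[OF A] and BD = M.submoduleD[OF B]
  show ?thesis
  proof (rule linear_graphI)
    show "?G \<subseteq> carrier M \<times> carrier E" using AD(1) BD(1) lin_mapsD(2)[OF f] by auto
    have "(\<zero>\<^bsub>M\<^esub> \<oplus>\<^bsub>M\<^esub> \<zero>\<^bsub>M\<^esub>, f \<zero>\<^bsub>M\<^esub>) \<in> ?G" using AD(2) BD(2) by blast
    thus "(\<zero>\<^bsub>M\<^esub>, \<zero>\<^bsub>E\<^esub>) \<in> ?G" using lin_maps_zero[OF f] by simp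
  next
    fix x y x' y' assume "(x, y) \<in> ?G" "(x', y') \<in> ?G"
    then obtain a b a' b' where ab: "x = a \<oplus>\<^bsub>M\<^esub> b" "y = f a" "x' = a' \<oplus>\<^bsub>M\<^esub> b'" "y' = f a'"
      "a \<in> A" "b \<in> B" "a' \<in> A" "b' \<in> B" by blast
    moreover have "a \<in> carrier M" "b \<in> carrier M" "a' \<in> carrier M" "b' \<in> carrier M"
      using ab AD(1) BD(1) by auto
    ultimately have "x \<oplus>\<^bsub>M\<^esub> x' = (a \<oplus>\<^bsub>M\<^esub> a') \<oplus>\<^bsub>M\<^esub> (b \<oplus>\<^bsub>M\<^esub> b')" "y \<oplus>\<^bsub>E\<^esub> y' = f (a \<oplus>\<^bsub>M\<^esub> a')"
      using lin_mapsD(3)[OF f, of a a'] by (simp_all add: M.a_ac)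
    thus "(x \<oplus>\<^bsub>M\<^esub> x', y \<oplus>\<^bsub>E\<^esub> y') \<in> ?G" using ab AD(3) BD(3) by blast
  next
    fix r x y assume r: "r \<in> carrier R" and "(x, y) \<in> ?G"
    then obtain a b where ab: "x = a \<oplus>\<^bsub>M\<^esub> b" "y = f a" "a \<in> A" "b \<in> B" by blast
    moreover have "a \<in> carrier M" "b \<in> carrier M" using ab AD(1) BD(1) by auto
    ultimately have "r \<odot>\<^bsub>M\<^esub> x = r \<odot>\<^bsub>M\<^esub> a \<oplus>\<^bsub>M\<^esub> r \<odot>\<^bsub>M\<^esub> b" "r \<odot>\<^bsub>E\<^esub> y = f (r \<odot>\<^bsub>M\<^esub> a)"
      using r lin_mapsD(4)[OF f] by (simp_all add: M.smult_r_distr)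
    thus "(r \<odot>\<^bsub>M\<^esub> x, r \<odot>\<^bsub>E\<^esub> y) \<in> ?G" using ab r AD(5) BD(5) by blast
  next
    fix y assume "(\<zero>\<^bsub>M\<^esub>, y) \<in> ?G"
    then obtain a b where ab: "\<zero>\<^bsub>M\<^esub> = a \<oplus>\<^bsub>M\<^esub> b" "y = f a" "a \<in> A" "b \<in> B" by blast
    hence "a = \<ominus>\<^bsub>M\<^esub> b" using AD(1) BD(1) by (metis M.add.inv_equality M.a_comm subsetD)
    hence "a \<in> A \<inter> B" using ab BD(4) by simp
    thus "y = \<zero>\<^bsub>E\<^esub>" using vanish ab(2) by blast
  qed
qed

end

locale injective_hom = hom_modules +
  assumes injective: "injective_module R E"
begin

lemma Baer_extension:
  assumes "ideal I R" "\<phi> \<in> I \<rightarrow> carrier E"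
    and "\<And>a b. a \<in> I \<Longrightarrow> b \<in> I \<Longrightarrow> \<phi> (a \<oplus>\<^bsub>R\<^esub> b) = \<phi> a \<oplus>\<^bsub>E\<^esub> \<phi> b"
    and "\<And>r a. r \<in> carrier R \<Longrightarrow> a \<in> I \<Longrightarrow> \<phi> (r \<otimes>\<^bsub>R\<^esub> a) = r \<odot>\<^bsub>E\<^esub> \<phi> a"
  obtains e where "e \<in> carrier E" "\<forall>a\<in>I. \<phi> a = a \<odot>\<^bsub>E\<^esub> e"
  using injective assms unfolding injective_module_def by blast

lemma linear_graph_Baer:
  assumes H: "linear_graph H" and m: "m \<in> carrier M"
  shows "\<exists>e\<in>carrier E. \<forall>r\<in>carrier R. \<forall>b. (r \<odot>\<^bsub>M\<^esub> m, b) \<in> H \<longrightarrow> b = r \<odot>\<^bsub>E\<^esub> e"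
proof -
  define I where "I = {r \<in> carrier R. r \<odot>\<^bsub>M\<^esub> m \<in> Domain H}"
  define \<phi> where "\<phi> r = (THE b. (r \<odot>\<^bsub>M\<^esub> m, b) \<in> H)" for r
  have I: "ideal I R"
    unfolding I_def by (rule M.colon_ideal[OF linear_graph_Domain_submodule[OF H] m])
  have \<phi>_eq: "\<phi> r = b" if "(r \<odot>\<^bsub>M\<^esub> m, b) \<in> H" for r b
    unfolding \<phi>_def using that
    by (rule the_equality) (use linear_graph_functional[OF H that] in auto)
  have \<phi>_graph: "(r \<odot>\<^bsub>M\<^esub> m, \<phi> r) \<in> H" if "r \<in> I" for r
    using that \<phi>_eq unfolding I_def by blast
  have "\<phi> \<in> I \<rightarrow> carrier E" using \<phi>_graph linear_graphD(1)[OF H] by blast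
  moreover have "\<phi> (a \<oplus>\<^bsub>R\<^esub> b) = \<phi> a \<oplus>\<^bsub>E\<^esub> \<phi> b" if "a \<in> I" "b \<in> I" for a b
  proof -
    have "(a \<oplus>\<^bsub>R\<^esub> b) \<odot>\<^bsub>M\<^esub> m = a \<odot>\<^bsub>M\<^esub> m \<oplus>\<^bsub>M\<^esub> b \<odot>\<^bsub>M\<^esub> m"
      using that m unfolding I_def by (simp add: M.smult_l_distr)
    thus ?thesis using \<phi>_eq linear_graphD(3)[OF H \<phi>_graph \<phi>_graph] that by metis
  qed
  moreover have "\<phi> (r \<otimes>\<^bsub>R\<^esub> a) = r \<odot>\<^bsub>E\<^esub> \<phi> a" if "r \<in> carrier R" "a \<in> I" for r a
  proof -
    have "(r \<otimes>\<^bsub>R\<^esub> a) \<odot>\<^bsub>M\<^esub> m = r \<odot>\<^bsub>M\<^esub> (a \<odot>\<^bsub>M\<^esub> m)"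
      using that m unfolding I_def by (simp add: M.smult_assoc1)
    thus ?thesis using \<phi>_eq linear_graphD(4)[OF H that(1) \<phi>_graph[OF that(2)]] by metis
  qed
  ultimately obtain e where e: "e \<in> carrier E" "\<forall>a\<in>I. \<phi> a = a \<odot>\<^bsub>E\<^esub> e"
    using Baer_extension[OF I] by blast
  have "b = r \<odot>\<^bsub>E\<^esub> e" if "r \<in> carrier R" "(r \<odot>\<^bsub>M\<^esub> m, b) \<in> H" for r b
    using that e(2) \<phi>_eq[OF that(2)] unfolding I_def by blast
  thus ?thesis using e(1) by blast
qed

lemma linear_graph_extends:
  assumes "linear_graph G"
  shows "\<exists>f\<in>carrier D. \<forall>a b. (a, b) \<in> G \<longrightarrow> f a = b"
proof -
  define \<A> where "\<A> = {H. linear_graph H \<and> G \<subseteq> H}"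
  have "\<exists>H\<in>\<A>. \<forall>H'\<in>\<A>. H \<subseteq> H' \<longrightarrow> H' = H"
  proof (rule subset_Zorn_nonempty)
    show "\<A> \<noteq> {}" using assms unfolding \<A>_def by blast
    fix \<C> assume \<C>: "\<C> \<noteq> {}" "subset.chain \<A> \<C>"
    hence "subset.chain {H. linear_graph H} \<C>" "\<forall>H\<in>\<C>. G \<subseteq> H"
      unfolding \<A>_def subset_chain_def by auto
    thus "\<Union>\<C> \<in> \<A>" using linear_graph_chain_Union[OF \<C>(1)] \<C>(1) unfolding \<A>_def by blast
  qed
  then obtain H where "H \<in> \<A>" and H_max: "\<forall>H'\<in>\<A>. H \<subseteq> H' \<longrightarrow> H' = H" by blast
  hence H: "linear_graph H" "G \<subseteq> H" unfolding \<A>_def by simp_all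
  have maximal: "H' = H" if "linear_graph H'" "H \<subseteq> H'" for H'
    using H_max H(2) that unfolding \<A>_def by blast
  have "carrier M \<subseteq> Domain H"
  proof
    fix m assume m: "m \<in> carrier M"
    then obtain e where e: "e \<in> carrier E"
      and compatible: "\<forall>r\<in>carrier R. \<forall>b. (r \<odot>\<^bsub>M\<^esub> m, b) \<in> H \<longrightarrow> b = r \<odot>\<^bsub>E\<^esub> e"
      using linear_graph_Baer[OF H(1)] by blast
    have "linear_graph (graph_adjoin H m e)" using H(1) m e compatible by (rule linear_graph_adjoin)
    hence "graph_adjoin H m e = H" using maximal graph_adjoin_superset(1)[OF H(1) m e] by blast
    hence "(m, e) \<in> H" using graph_adjoin_superset(2)[OF H(1) m e] by simp
    thus "m \<in> Domain H" by blast
  qed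
  then obtain f where "f \<in> carrier D" "\<forall>a b. (a, b) \<in> H \<longrightarrow> f a = b"
    using linear_graph_total_lin_map[OF H(1)] by blast
  thus ?thesis using H(2) by blast
qed

lemma exists_Hom_smult_eq:
  assumes x: "x \<in> carrier R" and g: "g \<in> carrier D"
    and ker: "\<forall>m\<in>carrier M. x \<odot>\<^bsub>M\<^esub> m = \<zero>\<^bsub>M\<^esub> \<longrightarrow> g m = \<zero>\<^bsub>E\<^esub>"
  shows "\<exists>h\<in>carrier D. x \<odot>\<^bsub>D\<^esub> h = g"
proof -
  obtain h where h: "h \<in> carrier D"
    and graph: "\<forall>a b. (a, b) \<in> {(x \<odot>\<^bsub>M\<^esub> m, g m) | m. m \<in> carrier M} \<longrightarrow> h a = b"
    using linear_graph_extends[OF linear_graph_smult_pairs[OF assms]] by blast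
  have "x \<odot>\<^bsub>D\<^esub> h = g"
  proof (rule lin_maps_eqI[OF D.smult_closed[OF x h] g])
    fix m assume "m \<in> carrier M"
    hence "h (x \<odot>\<^bsub>M\<^esub> m) = g m" using graph by blast
    thus "(x \<odot>\<^bsub>D\<^esub> h) m = g m" using \<open>m \<in> carrier M\<close> x lin_mapsD(4)[OF h] by simp
  qed
  thus ?thesis using h by blast
qed

lemma exists_Hom_glue:
  assumes A: "submodule A R M" and B: "submodule B R M" and f: "f \<in> carrier D"
    and vanish: "\<forall>y\<in>A \<inter> B. f y = \<zero>\<^bsub>E\<^esub>"
  shows "\<exists>h\<in>carrier D. (\<forall>a\<in>A. h a = f a) \<and> (\<forall>b\<in>B. h b = \<zero>\<^bsub>E\<^esub>)"
proof -
  note AD = M.submoduleD[OF A] and BD = M.submoduleD[OF B]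
  obtain h where h: "h \<in> carrier D"
    and graph: "\<forall>x y. (x, y) \<in> {(a \<oplus>\<^bsub>M\<^esub> b, f a) | a b. a \<in> A \<and> b \<in> B} \<longrightarrow> h x = y"
    using linear_graph_extends[OF linear_graph_sum_pairs[OF assms]] by blast
  have "h a = f a" if "a \<in> A" for a
  proof -
    have pair: "(a \<oplus>\<^bsub>M\<^esub> \<zero>\<^bsub>M\<^esub>, f a) \<in> {(a \<oplus>\<^bsub>M\<^esub> b, f a) | a b. a \<in> A \<and> b \<in> B}"
      using that BD(2) by blast
    show ?thesis using graph[rule_format, OF pair] subsetD[OF AD(1) that] by simp
  qed
  moreover have "h b = \<zero>\<^bsub>E\<^esub>" if "b \<in> B" for b
  proof -
    have pair: "(\<zero>\<^bsub>M\<^esub> \<oplus>\<^bsub>M\<^esub> b, f \<zero>\<^bsub>M\<^esub>) \<in> {(a \<oplus>\<^bsub>M\<^esub> b, f a) | a b. a \<in> A \<and> b \<in> B}"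
      using that AD(2) by blast
    show ?thesis using graph[rule_format, OF pair] subsetD[OF BD(1) that] lin_maps_zero[OF f] by simp
  qed
  ultimately show ?thesis using h by blast
qed

lemma Hom_vanishing_Inter_subset:
  assumes "finite \<U>" "\<forall>U\<in>\<U>. submodule U R M" "submodule W R D"
    and "\<forall>U\<in>\<U>. \<forall>g\<in>carrier D. (\<forall>u\<in>U. g u = \<zero>\<^bsub>E\<^esub>) \<longrightarrow> g \<in> W"
  shows "\<forall>g\<in>carrier D. (\<forall>u\<in>carrier M \<inter> \<Inter>\<U>. g u = \<zero>\<^bsub>E\<^esub>) \<longrightarrow> g \<in> W"
  using assms(1,2,4)
proof (induction \<U> rule: finite_induct)
  case empty
  show ?case using Hom_eq_zero_iff D.submoduleD(2)[OF assms(3)] by auto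
next
  case (insert U \<U>)
  show ?case
  proof (intro ballI impI)
    fix g assume g: "g \<in> carrier D" "\<forall>u\<in>carrier M \<inter> \<Inter>(insert U \<U>). g u = \<zero>\<^bsub>E\<^esub>"
    have U: "submodule U R M" and B: "submodule (carrier M \<inter> \<Inter>\<U>) R M"
      using insert.prems(1) M.Inter_submodule by auto
    have "\<forall>y\<in>U \<inter> (carrier M \<inter> \<Inter>\<U>). g y = \<zero>\<^bsub>E\<^esub>" using g(2) by auto
    \<comment> \<open>g = (g - h) + h with g - h vanishing on U and h on the remaining intersection\<close>
    then obtain h where h: "h \<in> carrier D" "\<forall>u\<in>U. h u = g u" "\<forall>b\<in>carrier M \<inter> \<Inter>\<U>. h b = \<zero>\<^bsub>E\<^esub>"
      using exists_Hom_glue[OF U B g(1)] by blast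
    have "h \<in> W" using insert h by blast
    moreover have "g \<oplus>\<^bsub>D\<^esub> \<ominus>\<^bsub>D\<^esub> h \<in> W"
    proof -
      have "(g \<oplus>\<^bsub>D\<^esub> \<ominus>\<^bsub>D\<^esub> h) u = \<zero>\<^bsub>E\<^esub>" if "u \<in> U" for u
        using that h g(1) M.submoduleD(1)[OF U] lin_mapsD(2)[OF g(1)]
        by (auto simp: Hom_minus_apply E.r_neg)
      thus ?thesis using insert.prems(2) g(1) h(1) by blast
    qed
    moreover have "g = (g \<oplus>\<^bsub>D\<^esub> \<ominus>\<^bsub>D\<^esub> h) \<oplus>\<^bsub>D\<^esub> h" using g(1) h(1) by (simp add: D.a_assoc D.l_neg)
    ultimately show "g \<in> W" using D.submoduleD(3)[OF assms(3)] by metis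
  qed
qed

lemma primary_component_witness:
  assumes p: "primeideal p R" and V: "submodule V R D"
    and p_sub: "p \<subseteq> {r \<in> carrier R. \<forall>g\<in>carrier D. r \<odot>\<^bsub>D\<^esub> g \<in> V}"
    and U: "primary_submodule R M U" and rad: "radical_colon R M (carrier M) U \<noteq> p"
  shows "\<exists>a\<in>carrier R - p. \<forall>g\<in>carrier D. (\<forall>u\<in>U. g u = \<zero>\<^bsub>E\<^esub>) \<longrightarrow> a \<odot>\<^bsub>D\<^esub> g \<in> V"
proof (cases "radical_colon R M (carrier M) U \<subseteq> p")
  case False
  then obtain a and k :: nat where a: "a \<in> carrier R" "a \<notin> p"
    and k: "\<forall>n\<in>carrier M. (a [^]\<^bsub>R\<^esub> k) \<odot>\<^bsub>M\<^esub> n \<in> U"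
    unfolding radical_colon_def by blast
  have "(a [^]\<^bsub>R\<^esub> k) \<odot>\<^bsub>D\<^esub> g \<in> V" if "g \<in> carrier D" "\<forall>u\<in>U. g u = \<zero>\<^bsub>E\<^esub>" for g
  proof -
    have "(a [^]\<^bsub>R\<^esub> k) \<odot>\<^bsub>D\<^esub> g = \<zero>\<^bsub>D\<^esub>"
      using Hom_smult_eq_zero_iff[of "a [^]\<^bsub>R\<^esub> k" g] that k a(1) by simp
    thus ?thesis using D.submoduleD(2)[OF V] by simp
  qed
  moreover have "a [^]\<^bsub>R\<^esub> k \<in> carrier R - p" using a primeideal.nat_pow_notin[OF p] by simp
  ultimately show ?thesis by blast
next
  case True
  with rad obtain x where x: "x \<in> p" "x \<notin> radical_colon R M (carrier M) U" by blast
  hence "x \<in> carrier R" using p_sub by blast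
  \<comment> \<open>multiplication by x is injective on M/U, hence surjective on the maps vanishing on U\<close>
  hence "\<forall>n\<in>carrier M. x \<odot>\<^bsub>M\<^esub> n \<in> U \<longrightarrow> n \<in> U"
    using U x(2) unfolding primary_submodule_def radical_colon_def by blast
  hence ker: "\<forall>m\<in>carrier M. x \<odot>\<^bsub>M\<^esub> m = \<zero>\<^bsub>M\<^esub> \<longrightarrow> m \<in> U"
    using M.submoduleD(2) U unfolding primary_submodule_def by metis
  have g_in_V: "g \<in> V" if g: "g \<in> carrier D" "\<forall>u\<in>U. g u = \<zero>\<^bsub>E\<^esub>" for g
  proof -
    obtain h where "h \<in> carrier D" "x \<odot>\<^bsub>D\<^esub> h = g"
      using exists_Hom_smult_eq[OF \<open>x \<in> carrier R\<close> g(1)] g(2) ker by blast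
    thus "g \<in> V" using p_sub x(1) by blast
  qed
  thus ?thesis using primeideal.one_notin[OF p] g_in_V by (intro bexI[of _ "\<one>\<^bsub>R\<^esub>"]) auto
qed

lemma primary_decomposition_Inter_nontrivial:
  assumes p: "primeideal p R" and V: "submodule V R D"
    and p_eq: "p = {r \<in> carrier R. \<forall>g\<in>carrier D. r \<odot>\<^bsub>D\<^esub> g \<in> V}"
    and primary: "\<forall>U\<in>set Us. primary_submodule R M U"
  shows "\<exists>z\<in>carrier M \<inter> \<Inter>{U \<in> set Us. radical_colon R M (carrier M) U \<noteq> p}. z \<noteq> \<zero>\<^bsub>M\<^esub>"
proof (rule ccontr)
  define \<U> where "\<U> = {U \<in> set Us. radical_colon R M (carrier M) U \<noteq> p}"
  have \<U>: "finite \<U>" "\<forall>U\<in>\<U>. submodule U R M"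
    using primary unfolding \<U>_def primary_submodule_def by auto
  have "\<exists>a\<in>carrier R - p. \<forall>U\<in>\<U>. \<forall>g\<in>carrier D. (\<forall>u\<in>U. g u = \<zero>\<^bsub>E\<^esub>) \<longrightarrow> a \<odot>\<^bsub>D\<^esub> g \<in> V"
  proof (rule primeideal.common_witness_outside[OF p \<U>(1)])
    show "\<forall>U\<in>\<U>. \<exists>a\<in>carrier R - p. \<forall>g\<in>carrier D. (\<forall>u\<in>U. g u = \<zero>\<^bsub>E\<^esub>) \<longrightarrow> a \<odot>\<^bsub>D\<^esub> g \<in> V"
      using primary_component_witness[OF p V] p_eq primary unfolding \<U>_def by auto
    show "\<forall>U\<in>\<U>. \<forall>a\<in>carrier R. \<forall>b\<in>carrier R.
        (\<forall>g\<in>carrier D. (\<forall>u\<in>U. g u = \<zero>\<^bsub>E\<^esub>) \<longrightarrow> a \<odot>\<^bsub>D\<^esub> g \<in> V) \<longrightarrow>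
        (\<forall>g\<in>carrier D. (\<forall>u\<in>U. g u = \<zero>\<^bsub>E\<^esub>) \<longrightarrow> (b \<otimes>\<^bsub>R\<^esub> a) \<odot>\<^bsub>D\<^esub> g \<in> V)"
      using D.submoduleD(5)[OF V] by (simp add: D.smult_assoc1)
  qed
  then obtain a where a: "a \<in> carrier R - p"
    and a_kills: "\<forall>U\<in>\<U>. \<forall>g\<in>carrier D. (\<forall>u\<in>U. g u = \<zero>\<^bsub>E\<^esub>) \<longrightarrow> a \<odot>\<^bsub>D\<^esub> g \<in> V"
    by blast
  have W: "submodule {g \<in> carrier D. a \<odot>\<^bsub>D\<^esub> g \<in> V} R D"
    using a D.smult_preimage_submodule[OF _ V] by blast
  have kills_Inter: "\<forall>g\<in>carrier D. (\<forall>u\<in>carrier M \<inter> \<Inter>\<U>. g u = \<zero>\<^bsub>E\<^esub>) \<longrightarrow>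
      g \<in> {g \<in> carrier D. a \<odot>\<^bsub>D\<^esub> g \<in> V}"
    using a_kills by (intro Hom_vanishing_Inter_subset[OF \<U> W]) blast
  assume "\<not> (\<exists>z\<in>carrier M \<inter> \<Inter>\<U>. z \<noteq> \<zero>\<^bsub>M\<^esub>)"
  hence "\<forall>u\<in>carrier M \<inter> \<Inter>\<U>. u = \<zero>\<^bsub>M\<^esub>" by blast
  hence "\<forall>g\<in>carrier D. a \<odot>\<^bsub>D\<^esub> g \<in> V" using kills_Inter lin_maps_zero by simp
  thus False using a p_eq by blast
qed

lemma Att_Hom_subset_Ass:
  assumes "noetherian_ring R" "has_primary_decomposition R M"
  shows "Att R D \<subseteq> Ass R M"
proof
  fix p assume "p \<in> Att R D"
  then obtain V where p: "primeideal p R" and V: "submodule V R D"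
    and p_eq: "p = {r \<in> carrier R. \<forall>g\<in>carrier D. r \<odot>\<^bsub>D\<^esub> g \<in> V}"
    unfolding Att_def by blast
  obtain Us where primary: "\<forall>U\<in>set Us. primary_submodule R M U"
    and decomp: "carrier M \<inter> \<Inter>(set Us) = {\<zero>\<^bsub>M\<^esub>}"
    using assms(2) unfolding has_primary_decomposition_def by blast
  obtain z1 where z1: "z1 \<in> carrier M \<inter> \<Inter>{U \<in> set Us. radical_colon R M (carrier M) U \<noteq> p}"
    "z1 \<noteq> \<zero>\<^bsub>M\<^esub>"
    using primary_decomposition_Inter_nontrivial[OF p V p_eq primary] by blast
  have "p \<subseteq> carrier R" using p_eq by blast
  then obtain z where "z \<in> carrier M" "{r \<in> carrier R. r \<odot>\<^bsub>M\<^esub> z = \<zero>\<^bsub>M\<^esub>} = p"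
    using annihilator_eq_of_primary_decomposition[OF M.module_axioms assms(1) _ primary decomp z1]
    by blast
  thus "p \<in> Ass R M" using p unfolding Ass_def by blast
qed

end

section \<open>Duality of associated and attached primes\<close>

locale residue_hull_dual = hom_modules +
  fixes m :: "'a set"
  assumes local_ring: "local_ring_with R m" and hull: "injective_hull_residue R m E"

sublocale residue_hull_dual \<subseteq> injective_hom
  using hull unfolding injective_hull_residue_def by unfold_locales blast

context residue_hull_dual
begin

lemma exists_Hom_separating:
  assumes P: "submodule P R M" and n: "n \<in> carrier M" "n \<notin> P"
  shows "\<exists>f\<in>carrier D. (\<forall>u\<in>P. f u = \<zero>\<^bsub>E\<^esub>) \<and> f n \<noteq> \<zero>\<^bsub>E\<^esub>"
proof -
  obtain e where e: "e \<in> carrier E" and ann_e: "{r \<in> carrier R. r \<odot>\<^bsub>E\<^esub> e = \<zero>\<^bsub>E\<^esub>} = m"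
    using hull unfolding injective_hull_residue_def by blast
  have "maximalideal m R" using local_ring unfolding local_ring_with_def by blast
  hence "e \<noteq> \<zero>\<^bsub>E\<^esub>" using ann_e maximalideal.I_notcarr[of m R] by auto
  have "ideal {r \<in> carrier R. r \<odot>\<^bsub>M\<^esub> n \<in> P} R" by (rule M.colon_ideal[OF P n(1)])
  moreover have "\<one>\<^bsub>R\<^esub> \<notin> {r \<in> carrier R. r \<odot>\<^bsub>M\<^esub> n \<in> P}" using n by simp
  ultimately obtain J where "maximalideal J R" "{r \<in> carrier R. r \<odot>\<^bsub>M\<^esub> n \<in> P} \<subseteq> J"
    using ideal_subset_maximalideal by blast
  hence "{r \<in> carrier R. r \<odot>\<^bsub>M\<^esub> n \<in> P} \<subseteq> m" using local_ring unfolding local_ring_with_def by blast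
  \<comment> \<open>so that r n \<mapsto> r e is well defined modulo P\<close>
  hence "\<forall>r\<in>carrier R. \<forall>b. (r \<odot>\<^bsub>M\<^esub> n, b) \<in> P \<times> {\<zero>\<^bsub>E\<^esub>} \<longrightarrow> b = r \<odot>\<^bsub>E\<^esub> e"
    using ann_e by auto
  hence "linear_graph (graph_adjoin (P \<times> {\<zero>\<^bsub>E\<^esub>}) n e)"
    by (rule linear_graph_adjoin[OF linear_graph_zero[OF P] n(1) e])
  then obtain f where "f \<in> carrier D"
    "\<forall>a b. (a, b) \<in> graph_adjoin (P \<times> {\<zero>\<^bsub>E\<^esub>}) n e \<longrightarrow> f a = b"
    using linear_graph_extends by blast
  thus ?thesis
    using graph_adjoin_superset[OF linear_graph_zero[OF P] n(1) e] \<open>e \<noteq> \<zero>\<^bsub>E\<^esub>\<close> by blast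
qed

lemma Hom_separates_points:
  assumes "x \<in> carrier M"
  shows "(\<forall>g\<in>carrier D. g x = \<zero>\<^bsub>E\<^esub>) \<longleftrightarrow> x = \<zero>\<^bsub>M\<^esub>"
  using exists_Hom_separating[OF M.zero_submodule assms] lin_maps_zero by auto

lemma Ass_subset_Att_Hom: "Ass R M \<subseteq> Att R D"
proof
  fix p assume "p \<in> Ass R M"
  then obtain n where p: "primeideal p R" and n: "n \<in> carrier M"
    and p_eq: "p = {r \<in> carrier R. r \<odot>\<^bsub>M\<^esub> n = \<zero>\<^bsub>M\<^esub>}"
    unfolding Ass_def by blast
  define V where "V = {g \<in> carrier D. g n = \<zero>\<^bsub>E\<^esub>}"
  have V: "submodule V R D"
    unfolding V_def using n by (intro D.submoduleI') auto
  have "r \<in> p \<longleftrightarrow> (\<forall>g\<in>carrier D. r \<odot>\<^bsub>D\<^esub> g \<in> V)" if r: "r \<in> carrier R" for r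
  proof -
    have "(\<forall>g\<in>carrier D. r \<odot>\<^bsub>D\<^esub> g \<in> V) \<longleftrightarrow> (\<forall>g\<in>carrier D. g (r \<odot>\<^bsub>M\<^esub> n) = \<zero>\<^bsub>E\<^esub>)"
      unfolding V_def using r n by (simp add: lin_mapsD)
    also have "\<dots> \<longleftrightarrow> r \<odot>\<^bsub>M\<^esub> n = \<zero>\<^bsub>M\<^esub>" using Hom_separates_points r n by simp
    finally show ?thesis using p_eq r by blast
  qed
  hence "p = {r \<in> carrier R. \<forall>g\<in>carrier D. r \<odot>\<^bsub>D\<^esub> g \<in> V}"
    using p_eq by blast
  thus "p \<in> Att R D" unfolding Att_def using p V by blast
qed

lemma Att_subset_Ass_Hom:
  assumes "noetherian_ring R" "has_secondary_decomposition R M"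
  shows "Att R M \<subseteq> Ass R D"
proof
  fix p assume "p \<in> Att R M"
  then obtain U where p: "primeideal p R" and U: "submodule U R M"
    and p_eq: "p = {r \<in> carrier R. \<forall>n\<in>carrier M. r \<odot>\<^bsub>M\<^esub> n \<in> U}"
    unfolding Att_def by blast
  obtain Ss where secondary: "\<forall>S\<in>set Ss. secondary_submodule R M S"
    and decomp: "submodule_sum M Ss = carrier M"
    using assms(2) unfolding has_secondary_decomposition_def by blast
  define Ts where "Ts = U # filter (\<lambda>S. radical_colon R M S {\<zero>\<^bsub>M\<^esub>} \<noteq> p) Ss"
  have Ts: "\<forall>T\<in>set Ts. submodule T R M"
    using U secondary unfolding Ts_def secondary_submodule_def by auto
  have P: "submodule (submodule_sum M Ts) R M" by (rule submodule_sum_submodule[OF M.module_axioms Ts])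
  obtain n where n: "n \<in> carrier M" "n \<notin> submodule_sum M Ts"
    using secondary_decomposition_sum_proper[OF M.module_axioms p U p_eq secondary]
      M.submoduleD(1)[OF P] unfolding Ts_def by blast
  then obtain f where f: "f \<in> carrier D" "\<forall>u\<in>submodule_sum M Ts. f u = \<zero>\<^bsub>E\<^esub>" "f n \<noteq> \<zero>\<^bsub>E\<^esub>"
    using exists_Hom_separating[OF P] by blast
  have "f \<noteq> \<zero>\<^bsub>D\<^esub>" using f(3) n(1) by auto
  moreover have "\<forall>S\<in>set Ss. radical_colon R M S {\<zero>\<^bsub>M\<^esub>} \<noteq> p \<longrightarrow> S \<subseteq> submodule_sum M Ts"
    using submodule_sum_upper[OF M.module_axioms Ts] unfolding Ts_def by auto
  moreover have "p \<subseteq> carrier R" using p_eq by blast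
  ultimately obtain g where "g \<in> carrier D" "{r \<in> carrier R. r \<odot>\<^bsub>D\<^esub> g = \<zero>\<^bsub>D\<^esub>} = p"
    using annihilator_eq_of_secondary_decomposition[OF assms(1) _ secondary decomp P _ f(1,2)] by blast
  thus "p \<in> Ass R D" using p unfolding Ass_def by blast
qed

end

theorem mainTheorem3:
  fixes R :: "('a, 'c) ring_scheme" and m :: "'a set"
    and M :: "('a, 'b) module" and E :: "('a, 'e) module"
  assumes "noetherian_ring R" and "cring R"
    and "local_ring_with R m"
    and "injective_hull_residue R m E"
    and "module R M"
  shows "(has_primary_decomposition R M \<longrightarrow> Ass R M = Att R (Hom_mod R M E)) \<and>
         (has_secondary_decomposition R M \<longrightarrow> Att R M = Ass R (Hom_mod R M E))"
proof -
  have "module R E" using assms(4) unfolding injective_hull_residue_def injective_module_def by blast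
  then interpret residue_hull_dual R M E m
    using assms(2-5) by (intro residue_hull_dual.intro hom_modules.intro residue_hull_dual_axioms.intro)
  show ?thesis
    using Ass_subset_Att_Hom Att_Hom_subset_Ass[OF assms(1)]
      Ass_Hom_subset_Att Att_subset_Ass_Hom[OF assms(1)] by blast
qed

end
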